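(* Let $L$ be a finite lattice with minimum $\mathbf{0}$ and $F$ a sheaf of finite-dimensional vector spaces on $L$. Then $$\chi\,\mathrm{HS}_*(L\setminus\mathbf{0};F)=-\sum_{x\in L\setminus\mathbf{0}}\mu_L(\mathbf{0},x)\dim F(x).$$
   Context: $\chi\,\mathrm{HS}_*(P;F)=\sum_n(-1)^n\dim\mathrm{HS}_n(P;F)$. A sheaf $F$ assigns a vector space $F(x)$ to each element and a linear map $F^y_x:F(y)\to F(x)$ to each $x\le y$, functorially. Sheaf homology $\mathrm{HS}_*(P;F)$ of a finite poset $P$: homology of $S_n(P;F)=\bigoplus_\sigma F(x_0)$ over chains $\sigma=(x_n\le\cdots\le x_0)$ with $d(s_\sigma)=F^{x_0}_{x_1}(s)_{d_0\sigma}+\sum_{i=1}^n(-1)^is_{d_i\sigma}$ ($d_i\sigma$ omits $x_i$). $L\setminus\mathbf{0}$ is $L$ with its minimum removed. Möbius function: $\mu_L(x,x)=1$, $\mu_L(x,y)=-\sum_{x\le z<y}\mu_L(x,z)$ for $x<y$. *)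

theory Defs
  imports Complex_Main "HOL-Library.Function_Algebras"
begin

function mobius :: "'a::{finite,order} \<Rightarrow> 'a \<Rightarrow> int" where
  "mobius x y =
     (if x = y then 1
      else if x < y then - (\<Sum>z\<in>{z. x \<le> z \<and> z < y}. mobius x z)
      else 0)"
  by auto
termination
  by (relation "measure (\<lambda>(x,y). card {w. w < y})")
     (auto intro!: psubset_card_mono dest: less_trans)

text \<open>All stalks F x are subspaces of one ambient vector space of type 'v over the
field 'k (scalar multiplication scale); R y x is the restriction map F^y_x from F y
to F x for x <= y.\<close>

definition is_sheaf ::
  "('k::field \<Rightarrow> 'v::ab_group_add \<Rightarrow> 'v) \<Rightarrow> 'a::order set \<Rightarrow> ('a \<Rightarrow> 'v set)
     \<Rightarrow> ('a \<Rightarrow> 'a \<Rightarrow> 'v \<Rightarrow> 'v) \<Rightarrow> bool" where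
  "is_sheaf scale P F R \<longleftrightarrow>
     vector_space scale \<and>
     (\<forall>x\<in>P. Modules.module.subspace scale (F x)) \<and>
     (\<forall>x\<in>P. \<forall>y\<in>P. x \<le> y \<longrightarrow>
        (\<forall>v\<in>F y. R y x v \<in> F x) \<and>
        (\<forall>v\<in>F y. \<forall>w\<in>F y. R y x (v + w) = R y x v + R y x w) \<and>
        (\<forall>a. \<forall>v\<in>F y. R y x (scale a v) = scale a (R y x v))) \<and>
     (\<forall>x\<in>P. \<forall>v\<in>F x. R x x v = v) \<and>
     (\<forall>x\<in>P. \<forall>y\<in>P. \<forall>z\<in>P. x \<le> y \<longrightarrow> y \<le> z \<longrightarrow>
        (\<forall>v\<in>F z. R y x (R z y v) = R z x v))"

definition finite_dim_stalks ::
  "('k::field \<Rightarrow> 'v::ab_group_add \<Rightarrow> 'v) \<Rightarrow> 'a set \<Rightarrow> ('a \<Rightarrow> 'v set) \<Rightarrow> bool" where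
  "finite_dim_stalks scale P F \<longleftrightarrow>
     (\<forall>x\<in>P. \<exists>B. finite B \<and> B \<subseteq> F x \<and> Modules.module.span scale B = F x)"

text \<open>An n-chain x_n <= ... <= x_0 of P is represented by the list [x_0, x_1, ..., x_n].\<close>

definition chains :: "'a::order set \<Rightarrow> nat \<Rightarrow> 'a list set" where
  "chains P n = {\<sigma>. length \<sigma> = Suc n \<and> set \<sigma> \<subseteq> P \<and> sorted_wrt (\<lambda>a b. b \<le> a) \<sigma>}"

definition face :: "nat \<Rightarrow> 'a list \<Rightarrow> 'a list" where
  "face i \<sigma> = take i \<sigma> @ drop (Suc i) \<sigma>"

text \<open>S_n(P;F) = direct sum over n-chains sigma of F(x_0), realised as functions on
lists that vanish off the n-chains.\<close>
definition chain_space :: "'a::order set \<Rightarrow> ('a \<Rightarrow> 'v::zero set) \<Rightarrow> nat \<Rightarrow> ('a list \<Rightarrow> 'v) set" where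
  "chain_space P F n =
     {c. \<forall>\<sigma>. (\<sigma> \<in> chains P n \<longrightarrow> c \<sigma> \<in> F (hd \<sigma>)) \<and> (\<sigma> \<notin> chains P n \<longrightarrow> c \<sigma> = 0)}"

definition bdry ::
  "('k::field \<Rightarrow> 'v::ab_group_add \<Rightarrow> 'v) \<Rightarrow> 'a::order set \<Rightarrow> ('a \<Rightarrow> 'a \<Rightarrow> 'v \<Rightarrow> 'v)
     \<Rightarrow> nat \<Rightarrow> ('a list \<Rightarrow> 'v) \<Rightarrow> ('a list \<Rightarrow> 'v)" where
  "bdry scale P R n c = (\<lambda>\<tau>.
     if n = 0 then 0
     else (\<Sum>\<sigma>\<in>chains P n. \<Sum>i\<in>{0..n}.
             if face i \<sigma> = \<tau> then
               (if i = 0 then R (\<sigma> ! 0) (\<sigma> ! 1) (c \<sigma>) else scale ((-1) ^ i) (c \<sigma>))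
             else 0))"

definition fscale :: "('k \<Rightarrow> 'v \<Rightarrow> 'v) \<Rightarrow> 'k \<Rightarrow> ('a list \<Rightarrow> 'v) \<Rightarrow> ('a list \<Rightarrow> 'v)" where
  "fscale scale a c = (\<lambda>\<sigma>. scale a (c \<sigma>))"

definition HS_dim ::
  "('k::field \<Rightarrow> 'v::ab_group_add \<Rightarrow> 'v) \<Rightarrow> 'a::order set \<Rightarrow> ('a \<Rightarrow> 'v set)
     \<Rightarrow> ('a \<Rightarrow> 'a \<Rightarrow> 'v \<Rightarrow> 'v) \<Rightarrow> nat \<Rightarrow> int" where
  "HS_dim scale P F R n =
     int (Vector_Spaces.vector_space.dim (fscale scale) {c \<in> chain_space P F n. bdry scale P R n c = 0})
     - int (Vector_Spaces.vector_space.dim (fscale scale) (bdry scale P R (Suc n) ` chain_space P F (Suc n)))"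

text \<open>Euler characteristic: sum_n (-1)^n dim HS_n (a finite sum, over the nonzero terms).\<close>
definition euler_char_HS ::
  "('k::field \<Rightarrow> 'v::ab_group_add \<Rightarrow> 'v) \<Rightarrow> 'a::order set \<Rightarrow> ('a \<Rightarrow> 'v set)
     \<Rightarrow> ('a \<Rightarrow> 'a \<Rightarrow> 'v \<Rightarrow> 'v) \<Rightarrow> int" where
  "euler_char_HS scale P F R =
     (\<Sum>n\<in>{n. HS_dim scale P F R n \<noteq> 0}. (-1) ^ n * HS_dim scale P F R n)"

end

theory Submission
  imports Defs
begin

text \<open>The chain complex \<open>S\<^sub>*(P;F)\<close> is the direct sum of the subcomplex \<open>N\<close> spanned by
  chains with pairwise distinct entries and the subcomplex \<open>D\<close> spanned by degenerate chains.
  \<open>D\<close> is acyclic: the operator \<open>h\<close> that inserts one more copy of the first repeated entry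
  \<open>x\<^sub>j\<close> of a chain (with sign \<open>(-1)\<^sup>j\<close>, and only when \<open>x\<^sub>j\<close> occurs an even number of times)
  satisfies \<open>d h + h d = 1\<close> up to chains with fewer distinct entries, so degenerate cycles are
  boundaries by induction on the number of distinct entries. Hence \<open>HS\<^sub>*(P;F)\<close> is the homology
  of the finite complex \<open>N\<close>, and by rank-nullity its Euler characteristic is
  \<open>\<Sum>\<^sub>n (-1)\<^sup>n dim N\<^sub>n = \<Sum>\<^sub>x dim F(x) \<Sum>\<^bsub>x = x\<^sub>0 > \<dots> > x\<^sub>n\<^esub> (-1)\<^sup>n\<close>.
  For \<open>P = L - {\<zero>}\<close> the inner sum is \<open>-\<mu>(\<zero>, x)\<close> by Philip Hall's theorem.\<close>

section \<open>Faces and degeneracies of lists\<close>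

lemma length_face [simp]: "i < length s \<Longrightarrow> length (face i s) = length s - 1"
  by (simp add: face_def)

lemma nth_face: "i < length s \<Longrightarrow> k < length s - 1 \<Longrightarrow>
    face i s ! k = (if k < i then s ! k else s ! Suc k)"
  by (auto simp: face_def nth_append min_def)

lemma hd_face_0: "2 \<le> length s \<Longrightarrow> hd (face 0 s) = s ! 1"
  by (cases s; cases "tl s") (auto simp: face_def)

lemma hd_face: "0 < i \<Longrightarrow> i < length s \<Longrightarrow> hd (face i s) = hd s"
  by (cases s) (auto simp: face_def)

lemma set_face_subset: "set (face i s) \<subseteq> set s"
  unfolding face_def by (auto dest: in_set_takeD in_set_dropD)

lemma face_face:
  assumes "j < i" "i < length s"
  shows "face j (face i s) = face (i - 1) (face j s)"
  using assms by (intro nth_equalityI) (auto simp: nth_face)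

lemma distinct_face: "distinct s \<Longrightarrow> distinct (face i s)"
proof -
  assume d: "distinct s"
  then have "distinct (take i s @ drop i s)" by simp
  then have "set (take i s) \<inter> set (drop i s) = {}" unfolding distinct_append by blast
  moreover have "set (drop (Suc i) s) \<subseteq> set (drop i s)" by (rule set_drop_subset_set_drop) simp
  ultimately show ?thesis using d by (auto simp: face_def distinct_drop)
qed

lemma face_eq_if_constant_run:
  assumes ji: "j \<le> i" and il: "i < length s" and run: "\<And>m. j \<le> m \<Longrightarrow> m \<le> i \<Longrightarrow> s ! m = s ! j"
  shows "face i s = face j s"
proof (rule nth_equalityI)
  show "length (face i s) = length (face j s)" using ji il by simp
  fix k assume "k < length (face i s)"
  then have k: "k < length s - 1" using il by simp
  consider "k < j" | "j \<le> k" "k < i" | "i \<le> k" by linarith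
  then show "face i s ! k = face j s ! k"
  proof cases
    case 2
    then have "s ! k = s ! j" "s ! Suc k = s ! j" using run[of k] run[of "Suc k"] by auto
    then show ?thesis using 2 k ji il by (simp add: nth_face)
  qed (use k ji il in \<open>simp_all add: nth_face\<close>)
qed

lemma not_distinct_face:
  assumes L: "Suc j < length s" and e: "s ! j = s ! Suc j" and i: "i < length s"
    and ij: "i \<noteq> j" "i \<noteq> Suc j"
  shows "\<not> distinct (face i s)"
proof (cases "i < j")
  case True
  then have "face i s ! (j - 1) = face i s ! j" "j - 1 < length (face i s)" "j < length (face i s)"
    "j - 1 \<noteq> j"
    using L e i by (auto simp: nth_face)
  then show ?thesis using nth_eq_iff_index_eq[of "face i s" "j - 1" j] by blast
next
  case False
  then have "Suc j < i" using ij by simp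
  then have "face i s ! j = face i s ! Suc j" "Suc j < length (face i s)"
    using L e i by (auto simp: nth_face)
  then show ?thesis using nth_eq_iff_index_eq[of "face i s" j "Suc j"] by auto
qed

lemma card_set_face_less:
  assumes i: "i < length s" and unique: "\<And>m. m < length s \<Longrightarrow> s ! m = s ! i \<Longrightarrow> m = i"
  shows "card (set (face i s)) < card (set s)"
proof (rule psubset_card_mono)
  have "s ! i \<notin> set (face i s)"
  proof
    assume "s ! i \<in> set (face i s)"
    then obtain k where k: "k < length s - 1" "face i s ! k = s ! i"
      using i by (auto simp: in_set_conv_nth)
    show False
    proof (cases "k < i")
      case True
      then show False using k i unique[of k] by (simp add: nth_face)
    next
      case False
      moreover have "Suc k < length s" using k by linarith
      ultimately show False using k i unique[of "Suc k"] by (simp add: nth_face)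
    qed
  qed
  then show "set (face i s) \<subset> set s" using i set_face_subset[of i s] by auto
qed simp

lemma count_face:
  assumes "i < length s"
  shows "count_list (face i s) x = count_list s x - (if s ! i = x then 1 else 0)"
proof -
  have "count_list s x = count_list (take i s) x + count_list (s ! i # drop (Suc i) s) x"
    using assms by (metis append_take_drop_id count_list_append Cons_nth_drop_Suc)
  then show ?thesis by (simp add: face_def)
qed

definition degen :: "nat \<Rightarrow> 'a list \<Rightarrow> 'a list" where
  "degen j s = take j s @ s ! j # drop j s"

lemma length_degen [simp]: "j < length s \<Longrightarrow> length (degen j s) = Suc (length s)"
  by (simp add: degen_def)

lemma nth_degen: "j < length s \<Longrightarrow> k < Suc (length s) \<Longrightarrow>
    degen j s ! k = (if k \<le> j then s ! k else s ! (k - 1))"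
  by (auto simp: degen_def nth_append min_def nth_Cons split: nat.split
      intro!: arg_cong[where f="(!) s"])

lemma hd_degen: "j < length s \<Longrightarrow> hd (degen j s) = hd s"
  by (cases s; cases j) (auto simp: degen_def)

lemma set_degen: "j < length s \<Longrightarrow> set (degen j s) = set s"
  unfolding degen_def by (metis Cons_nth_drop_Suc append_take_drop_id insert_absorb list.set_intros(1)
      list.simps(15) set_append)

lemma face_degen_within_run:
  assumes ji: "j \<le> i" and il: "i < Suc (length s)" and jl: "j < length s"
    and run: "\<And>m. j \<le> m \<Longrightarrow> m < i \<Longrightarrow> s ! m = s ! j"
  shows "face i (degen j s) = s"
proof (rule nth_equalityI)
  show "length (face i (degen j s)) = length s" using il jl by simp
  fix k assume "k < length (face i (degen j s))"
  then have k: "k < length s" using il jl by simp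
  have f: "face i (degen j s) ! k = (if k < i then degen j s ! k else degen j s ! Suc k)"
    using nth_face[of i "degen j s" k] il jl k by simp
  consider "k \<le> j" | "j < k" "k < i" | "i \<le> k" by linarith
  then show "face i (degen j s) ! k = s ! k"
  proof cases
    case 2
    then have "s ! (k - 1) = s ! j" "s ! k = s ! j" using run[of "k - 1"] run[of k] by auto
    then show ?thesis using f 2 jl k by (simp add: nth_degen)
  qed (use f ji jl k in \<open>simp_all add: nth_degen\<close>)
qed

lemma face_degen_after_run:
  assumes ji: "Suc j < i" and il: "i < Suc (length s)"
  shows "face i (degen j s) = degen j (face (i - 1) s)"
proof (rule nth_equalityI)
  have jl: "j < length s" "j < length (face (i - 1) s)" using ji il by simp_all
  show "length (face i (degen j s)) = length (degen j (face (i - 1) s))" using il jl ji by simp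
  fix k assume "k < length (face i (degen j s))"
  then have k: "k < length s" using il jl by simp
  have f: "face i (degen j s) ! k = (if k < i then degen j s ! k else degen j s ! Suc k)"
    using nth_face[of i "degen j s" k] il jl k by simp
  have g: "degen j (face (i - 1) s) ! k
      = (if k \<le> j then face (i - 1) s ! k else face (i - 1) s ! (k - 1))"
    using nth_degen[OF jl(2), of k] k il ji by simp
  have h: "m < length s - 1 \<Longrightarrow> face (i - 1) s ! m = (if m < i - 1 then s ! m else s ! Suc m)" for m
    using nth_face[of "i - 1" s m] il ji by simp
  consider "k \<le> j" | "j < k" "k < i" | "i \<le> k" by linarith
  then show "face i (degen j s) ! k = degen j (face (i - 1) s) ! k"
  proof cases
    case 1
    then have "k < i - 1" "k < length s - 1" using ji il by linarith+
    then show ?thesis using f g h[of k] jl k ji 1 by (simp add: nth_degen)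
  next
    case 2
    then have "k - 1 < i - 1" "k - 1 < length s - 1" "\<not> k \<le> j" using ji il k by linarith+
    then show ?thesis using f g h[of "k - 1"] jl k ji 2 by (simp add: nth_degen)
  next
    case 3
    then have "\<not> k - 1 < i - 1" "k - 1 < length s - 1" "\<not> k \<le> j" "Suc (k - 1) = k" "\<not> k < i"
      using ji il k by linarith+
    then show ?thesis using f g h[of "k - 1"] jl k 3 by (simp add: nth_degen)
  qed
qed

lemma degen_face:
  assumes j: "Suc j < length s" and e: "s ! j = s ! Suc j"
  shows "degen j (face j s) = s"
proof (rule nth_equalityI)
  have jl: "j < length (face j s)" using j by simp
  show "length (degen j (face j s)) = length s" using j jl by simp
  fix k assume "k < length (degen j (face j s))"
  then have k: "k < length s" using jl j by simp
  have d: "degen j (face j s) ! k = (if k \<le> j then face j s ! k else face j s ! (k - 1))"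
    using nth_degen[OF jl, of k] k j by simp
  consider "k < j" | "k = j" | "j < k" by linarith
  then show "degen j (face j s) ! k = s ! k"
  proof cases
    case 3
    then have "\<not> k - 1 < j" "Suc (k - 1) = k" "k - 1 < length s - 1" using k by auto
    then show ?thesis using d k j 3 by (simp add: nth_face)
  qed (use d k j e in \<open>simp_all add: nth_face\<close>)
qed

abbreviation descending :: "'a::order list \<Rightarrow> bool" where
  "descending s \<equiv> sorted_wrt (\<lambda>a b. b \<le> a) s"

lemma descending_nth_le: "descending s \<Longrightarrow> i \<le> j \<Longrightarrow> j < length s \<Longrightarrow> s ! j \<le> s ! i"
  by (cases "i = j") (auto simp: sorted_wrt_iff_nth_less)

lemma descending_nth_eq_between:
  assumes "descending s" "a \<le> m" "m \<le> b" "b < length s" "s ! a = s ! b"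
  shows "s ! m = s ! a"
proof -
  have "s ! b \<le> s ! m" "s ! m \<le> s ! a"
    using descending_nth_le[OF assms(1,3,4)] descending_nth_le[of s a m] assms(1-4) by simp_all
  then show ?thesis using assms(5) by (metis order.antisym)
qed

lemma descending_count_hd:
  "descending xs \<Longrightarrow> i < length xs \<Longrightarrow> xs ! i = hd xs \<longleftrightarrow> i < count_list xs (hd xs)"
proof (induction xs arbitrary: i)
  case (Cons x ys)
  show ?case
  proof (cases "ys \<noteq> [] \<and> hd ys = x")
    case True
    then show ?thesis using Cons by (cases i) auto
  next
    case False
    then have "x \<notin> set ys" using Cons.prems(1) by (cases ys) (auto dest: order.antisym)
    then show ?thesis using Cons.prems by (cases i) (auto simp: count_list_0_iff nth_mem)
  qed
qed simp

definition first_repeat :: "'a list \<Rightarrow> nat" where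
  "first_repeat s = (LEAST j. Suc j < length s \<and> s ! j = s ! Suc j)"

lemma first_repeat_eqI:
  assumes "Suc j < length s" "s ! j = s ! Suc j" "\<And>k. k < j \<Longrightarrow> s ! k \<noteq> s ! Suc k"
  shows "first_repeat s = j"
  unfolding first_repeat_def
  by (rule Least_equality) (use assms not_less in auto)

context
  fixes s :: "'a::order list"
  assumes descending: "descending s" and not_distinct: "\<not> distinct s"
begin

lemma first_repeat:
  "Suc (first_repeat s) < length s" "s ! first_repeat s = s ! Suc (first_repeat s)"
proof -
  obtain a b where "a < b" "b < length s" "s ! a = s ! b"
    using not_distinct by (metis distinct_conv_nth linorder_neqE_nat)
  then have "Suc a < length s \<and> s ! a = s ! Suc a"
    using descending_nth_eq_between[OF descending, of a "Suc a" b] by auto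
  then show "Suc (first_repeat s) < length s" "s ! first_repeat s = s ! Suc (first_repeat s)"
    unfolding first_repeat_def by (metis (mono_tags, lifting) LeastI)+
qed

lemma before_first_repeat: "k < first_repeat s \<Longrightarrow> s ! k \<noteq> s ! Suc k"
  using not_less_Least[of k] first_repeat unfolding first_repeat_def by force

lemma unique_before_first_repeat:
  assumes "i < first_repeat s" "m < length s" "s ! m = s ! i"
  shows "m = i"
proof (rule ccontr)
  assume "m \<noteq> i"
  define a b where "a = min i m" and "b = max i m"
  have ab: "a < b" "b < length s" "s ! a = s ! b" "a < first_repeat s"
    using assms \<open>m \<noteq> i\<close> first_repeat(1) by (auto simp: a_def b_def min_def max_def)
  then have "s ! Suc a = s ! a" using descending_nth_eq_between[OF descending, of a "Suc a" b] by simp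
  then show False using before_first_repeat[OF ab(4)] by simp
qed

lemma count_first_repeat_drop:
  "count_list s (s ! first_repeat s) = count_list (drop (first_repeat s) s) (s ! first_repeat s)"
proof -
  have "s ! first_repeat s \<notin> set (take (first_repeat s) s)"
    using unique_before_first_repeat first_repeat by (fastforce simp: in_set_conv_nth)
  then show ?thesis by (metis append_take_drop_id count_list_append count_notin add_0)
qed

lemma nth_eq_first_repeat_iff:
  assumes "m < length s"
  defines "j \<equiv> first_repeat s"
  shows "s ! m = s ! j \<longleftrightarrow> j \<le> m \<and> m < j + count_list s (s ! j)"
proof (cases "m < j")
  case True
  then show ?thesis using unique_before_first_repeat[of m j] first_repeat by (auto simp: j_def)
next
  case False
  then show ?thesis
    using descending_count_hd[of "drop j s" "m - j"] first_repeat assms(1) descending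
      count_first_repeat_drop
    by (auto simp: j_def hd_drop_conv_nth sorted_wrt_drop)
qed

lemma first_repeat_run_bounds:
  "2 \<le> count_list s (s ! first_repeat s)"
  "first_repeat s + count_list s (s ! first_repeat s) \<le> length s"
proof -
  show "2 \<le> count_list s (s ! first_repeat s)"
    using nth_eq_first_repeat_iff[of "Suc (first_repeat s)"] first_repeat by auto
  have "count_list s (s ! first_repeat s) \<le> length s - first_repeat s"
    using count_first_repeat_drop count_le_length[of "drop (first_repeat s) s"] by simp
  then show "first_repeat s + count_list s (s ! first_repeat s) \<le> length s"
    using first_repeat(1) by linarith
qed

end

section \<open>Rank and nullity\<close>

definition linear_on :: "('k \<Rightarrow> 'v \<Rightarrow> 'v) \<Rightarrow> 'v::plus set \<Rightarrow> ('v \<Rightarrow> 'v) \<Rightarrow> bool" where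
  "linear_on scale U f \<longleftrightarrow>
     (\<forall>x\<in>U. \<forall>y\<in>U. f (x + y) = f x + f y) \<and> (\<forall>a. \<forall>x\<in>U. f (scale a x) = scale a (f x))"

lemma linear_on_subset: "linear_on scale U f \<Longrightarrow> X \<subseteq> U \<Longrightarrow> linear_on scale X f"
  unfolding linear_on_def by (meson subsetD)

context vector_space
begin

lemma dim_zero_subspace: "dim {0} = 0"
  using dim_span_eq_card_independent[of "{}"] by (simp add: independent_empty)

lemma finite_basis_exists:
  assumes "U \<subseteq> span A0" "finite A0"
  obtains B where "B \<subseteq> U" "independent B" "U \<subseteq> span B" "card B = dim U" "finite B"
proof -
  obtain B where B: "B \<subseteq> U" "independent B" "U \<subseteq> span B" "card B = dim U"
    using basis_exists by blast
  have "finite B" using independent_span_bound[OF assms(2) B(2)] B(1) assms(1) by auto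
  then show ?thesis using B that by blast
qed

lemma independent_coeff_zero:
  "independent B \<Longrightarrow> T \<subseteq> B \<Longrightarrow> finite T \<Longrightarrow> (\<Sum>v\<in>T. u v *s v) = 0 \<Longrightarrow> v \<in> T \<Longrightarrow> u v = 0"
  unfolding independent_explicit_finite_subsets by blast

context
  fixes U f assumes U: "subspace U" and lin: "linear_on scale U f"
begin

lemma linear_on_zero: "f 0 = 0"
  using lin subspace_0[OF U] unfolding linear_on_def by (metis add_cancel_left_right add_0)

lemma linear_on_sum: "finite X \<Longrightarrow> (\<And>x. x \<in> X \<Longrightarrow> g x \<in> U) \<Longrightarrow> f (sum g X) = (\<Sum>x\<in>X. f (g x))"
proof (induction X rule: finite_induct)
  case (insert x X)
  have "sum g X \<in> U" using insert.prems by (intro subspace_sum[OF U]) auto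
  then show ?case using insert lin by (simp add: linear_on_def)
qed (simp add: linear_on_zero)

lemma subspace_kernel_on: "subspace {x \<in> U. f x = 0}"
  using lin subspace_0[OF U] subspace_add[OF U] subspace_scale[OF U] linear_on_zero
  unfolding subspace_def linear_on_def by auto

lemma subspace_image_on: "subspace (f ` U)"
  unfolding subspace_def
proof (intro conjI ballI allI)
  show "0 \<in> f ` U" using linear_on_zero subspace_0[OF U] by (metis image_eqI)
  show "x + y \<in> f ` U" if "x \<in> f ` U" "y \<in> f ` U" for x y
    using that lin subspace_add[OF U] unfolding linear_on_def by (metis (no_types, lifting) image_iff)
  show "c *s x \<in> f ` U" if "x \<in> f ` U" for c x
    using that lin subspace_scale[OF U] unfolding linear_on_def by (metis (no_types, lifting) image_iff)
qed

lemma linear_on_lincomb: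
  assumes "finite X" "X \<subseteq> U"
  shows "f (\<Sum>b\<in>X. k b *s b) = (\<Sum>b\<in>X. k b *s f b)"
proof -
  have "f (\<Sum>b\<in>X. k b *s b) = (\<Sum>b\<in>X. f (k b *s b))"
    using assms by (intro linear_on_sum) (auto intro: subspace_scale[OF U])
  also have "\<dots> = (\<Sum>b\<in>X. k b *s f b)"
    using assms(2) lin by (intro sum.cong) (auto simp: linear_on_def)
  finally show ?thesis .
qed

context
  fixes A B
  assumes A: "A \<subseteq> {x \<in> U. f x = 0}" "{x \<in> U. f x = 0} \<subseteq> span A" "finite A"
    and B: "A \<subseteq> B" "B \<subseteq> U" "independent B" "finite B" "U \<subseteq> span B"
begin

lemma basis_complement_coeff_zero:
  assumes k: "(\<Sum>b\<in>B - A. k b *s f b) = 0" and b: "b \<in> B - A"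
  shows "k b = 0"
proof -
  let ?y = "\<Sum>b\<in>B - A. k b *s b"
  have "?y \<in> U" using B(2) by (intro subspace_sum[OF U] subspace_scale[OF U]) auto
  then have "?y \<in> span A" using k A(2) B(2,4) linear_on_lincomb[of "B - A" k] by auto
  then obtain m where m: "?y = (\<Sum>a\<in>A. m a *s a)" using span_finite[OF A(3)] by auto
  define w where "w v = (if v \<in> A then - m v else k v)" for v
  have "(\<Sum>v\<in>B. w v *s v) = (\<Sum>v\<in>B - A. w v *s v) + (\<Sum>v\<in>A. w v *s v)"
    using B(1,4) by (metis sum.subset_diff)
  also have "\<dots> = ?y - (\<Sum>a\<in>A. m a *s a)"
    by (simp add: w_def sum_negf)
  finally have "(\<Sum>v\<in>B. w v *s v) = 0" using m by simp
  then have "w b = 0" using independent_coeff_zero[OF B(3) order_refl B(4)] b by blast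
  then show "k b = 0" using b by (simp add: w_def)
qed

lemma inj_on_basis_complement: "inj_on f (B - A)"
proof (rule inj_onI, rule ccontr)
  fix b1 b2 assume b: "b1 \<in> B - A" "b2 \<in> B - A" "f b1 = f b2" "b1 \<noteq> b2"
  define k where "k b = (if b = b1 then 1 else if b = b2 then - 1 else (0::'a))" for b
  have "(\<Sum>b\<in>B - A. k b *s f b) = f b1 - f b2"
    using b B(4) by (simp add: k_def if_distrib[of "\<lambda>c. c *s _"] sum.If_cases Int_absorb1 cong: if_cong)
  then show False using basis_complement_coeff_zero[of k b1] b by (simp add: k_def)
qed

lemma independent_image_basis_complement: "independent (f ` (B - A))"
proof (rule independent_if_scalars_zero)
  show "finite (f ` (B - A))" using B(4) by simp
  fix g x assume "(\<Sum>x\<in>f ` (B - A). g x *s x) = 0" "x \<in> f ` (B - A)"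
  then show "g x = 0"
    using basis_complement_coeff_zero[of "g \<circ> f"] by (auto simp: sum.reindex[OF inj_on_basis_complement])
qed

lemma image_subset_span_basis_complement: "f ` U \<subseteq> span (f ` (B - A))"
proof
  fix z assume "z \<in> f ` U"
  then obtain x where x: "x \<in> U" "z = f x" by blast
  then obtain k where k: "x = (\<Sum>b\<in>B. k b *s b)" using B(5) span_finite[OF B(4)] by blast
  have "f x = (\<Sum>b\<in>B. k b *s f b)"
    unfolding k using linear_on_lincomb[OF B(4,2)] .
  also have "\<dots> = (\<Sum>b\<in>B - A. k b *s f b)"
    using A(1) B(4) by (intro sum.mono_neutral_right) auto
  also have "\<dots> \<in> span (f ` (B - A))"
    by (intro span_sum span_scale span_base) auto
  finally show "z \<in> span (f ` (B - A))" using x by simp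
qed

lemma dim_image_eq_card_basis_complement: "dim (f ` U) = card (B - A)"
  using dim_unique[OF _ image_subset_span_basis_complement independent_image_basis_complement]
    card_image[OF inj_on_basis_complement] B(2) by auto

end

lemma rank_nullity:
  assumes fin: "U \<subseteq> span A0" "finite A0"
  shows "dim U = dim {x \<in> U. f x = 0} + dim (f ` U)"
proof -
  let ?K = "{x \<in> U. f x = 0}"
  obtain A where A: "A \<subseteq> ?K" "independent A" "?K \<subseteq> span A" "card A = dim ?K" "finite A"
    using finite_basis_exists[of ?K A0] fin by blast
  obtain B where B: "A \<subseteq> B" "B \<subseteq> U" "independent B" "U \<subseteq> span B"
    using maximal_independent_subset_extend[of A U] A(1,2) by blast
  have fB: "finite B" using independent_span_bound[OF fin(2) B(3)] B(2) fin(1) by auto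
  show ?thesis
    using dim_image_eq_card_basis_complement[OF A(1,3,5) B(1-3) fB B(4)] basis_card_eq_dim[OF B(2,4,3)]
      A(4) card_Diff_subset[OF A(5) B(1)] card_mono[OF fB B(1)]
    by simp
qed

end

end

lemma mem_chains_nth: "s \<in> chains P n \<longleftrightarrow> length s = Suc n \<and> (\<forall>i<Suc n. s ! i \<in> P)
   \<and> (\<forall>i j. i < j \<longrightarrow> j < Suc n \<longrightarrow> s ! j \<le> s ! i)"
  unfolding chains_def sorted_wrt_iff_nth_less by (fastforce simp: subset_iff in_set_conv_nth)

lemma finite_chains: "finite (chains (P::'a::{finite,order} set) n)"
proof -
  have "finite {xs::'a list. set xs \<subseteq> UNIV \<and> length xs = Suc n}"
    by (rule finite_lists_length_eq) simp
  then show ?thesis by (rule finite_subset[rotated]) (auto simp: chains_def)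
qed

lemma chains_descending: "s \<in> chains P n \<Longrightarrow> descending s"
  by (simp add: chains_def)

lemma length_chains: "s \<in> chains P n \<Longrightarrow> length s = Suc n"
  by (simp add: chains_def)

lemma hd_chains_mem: "s \<in> chains P n \<Longrightarrow> hd s \<in> P"
  by (cases s) (auto simp: chains_def)

lemma hd_chains_eq: "s \<in> chains P n \<Longrightarrow> hd s = s ! 0"
  by (cases s) (auto simp: chains_def)

lemma chains_nth_le: "s \<in> chains P n \<Longrightarrow> a \<le> b \<Longrightarrow> b \<le> n \<Longrightarrow> s ! b \<le> s ! a"
  unfolding mem_chains_nth by (cases "a = b") auto

lemma face_in_chains:
  assumes s: "s \<in> chains P (Suc n)" and i: "i \<le> Suc n"
  shows "face i s \<in> chains P n"
  unfolding mem_chains_nth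
proof (intro conjI allI impI)
  have L: "length s = Suc (Suc n)" using s by (simp add: length_chains)
  then show "length (face i s) = Suc n" using i by simp
  show "face i s ! k \<in> P" if "k < Suc n" for k
    using that s i L by (auto simp: nth_face mem_chains_nth)
  show "face i s ! l \<le> face i s ! k" if "k < l" "l < Suc n" for k l
    using that s i L by (auto simp: nth_face mem_chains_nth)
qed

lemma degen_in_chains:
  assumes s: "s \<in> chains P n" and j: "j \<le> n"
  shows "degen j s \<in> chains P (Suc n)"
  unfolding mem_chains_nth
proof (intro conjI allI impI)
  have L: "length s = Suc n" using s by (simp add: length_chains)
  then show "length (degen j s) = Suc (Suc n)" using j by simp
  show "degen j s ! k \<in> P" if "k < Suc (Suc n)" for k
    using that s j L by (auto simp: nth_degen mem_chains_nth)
  show "degen j s ! l \<le> degen j s ! k" if kl: "k < l" "l < Suc (Suc n)" for k l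
  proof -
    let ?k = "if k \<le> j then k else k - 1" and ?l = "if l \<le> j then l else l - 1"
    have "degen j s ! k = s ! ?k" "degen j s ! l = s ! ?l" using kl j L by (simp_all add: nth_degen)
    moreover have "?k \<le> ?l" "?l \<le> n" using kl j by auto
    ultimately show ?thesis using chains_nth_le[OF s] by simp
  qed
qed

definition signed :: "nat \<Rightarrow> 'v::group_add \<Rightarrow> 'v" where
  "signed i u = (if even i then u else - u)"

lemma signed_add: "signed i ((u::'v::ab_group_add) + v) = signed i u + signed i v"
  by (simp add: signed_def)

lemma signed_0 [simp]: "signed i 0 = 0"
  by (simp add: signed_def)

lemma signed_signed: "signed i (signed j u) = signed (i + j) u"
  by (simp add: signed_def)

lemma signed_signed_same [simp]: "signed i (signed i u) = u"
  by (simp add: signed_def)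

lemma signed_Suc: "signed (Suc i) u = - signed i u"
  by (simp add: signed_def)

lemma signed_sum: "signed i (sum f A) = (\<Sum>a\<in>A. signed i (f a::'v::ab_group_add))"
  by (simp add: signed_def sum_negf)

lemma sum_signed_interval:
  "(\<Sum>i\<in>{j..<j + r}. signed i (u::'v::ab_group_add)) = (if even r then 0 else signed j u)"
proof (induction r)
  case (Suc r)
  have "(\<Sum>i\<in>{j..<j + Suc r}. signed i u) = (\<Sum>i\<in>{j..<j + r}. signed i u) + signed (j + r) u"
    by (simp add: sum.atLeastLessThan_Suc)
  then show ?case using Suc by (simp add: signed_def)
qed simp

lemma sum_if_const_cond: "(\<Sum>i\<in>A. if b then f i else 0) = (if b then sum f A else 0)"
  by simp

lemma sum_apply_fun: "(sum f A) x = (\<Sum>a\<in>A. f a x)"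
  by (induction A rule: infinite_finite_induct) auto

lemma vector_space_fscale: "vector_space scale \<Longrightarrow> vector_space (fscale scale)"
  unfolding vector_space_def fscale_def by (simp add: fun_eq_iff)

locale finite_sheaf =
  fixes scale :: "'k::field \<Rightarrow> 'v::ab_group_add \<Rightarrow> 'v"
    and P :: "'a::{finite,order} set" and F :: "'a \<Rightarrow> 'v set"
    and R :: "'a \<Rightarrow> 'a \<Rightarrow> 'v \<Rightarrow> 'v"
  assumes sheaf: "is_sheaf scale P F R" and finite_dim: "finite_dim_stalks scale P F"
begin

sublocale stalk: vector_space scale
  using sheaf by (simp add: is_sheaf_def)

sublocale fun_vs: vector_space "fscale scale"
  by (rule vector_space_fscale) unfold_locales

lemma stalk_subspace: "x \<in> P \<Longrightarrow> stalk.subspace (F x)"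
  using sheaf by (simp add: is_sheaf_def)

lemma stalk_zero: "x \<in> P \<Longrightarrow> 0 \<in> F x"
  using stalk_subspace stalk.subspace_0 by blast

lemma stalk_add: "x \<in> P \<Longrightarrow> u \<in> F x \<Longrightarrow> v \<in> F x \<Longrightarrow> u + v \<in> F x"
  using stalk_subspace stalk.subspace_add by blast

lemma stalk_scale: "x \<in> P \<Longrightarrow> u \<in> F x \<Longrightarrow> scale a u \<in> F x"
  using stalk_subspace stalk.subspace_scale by blast

lemma stalk_sum: "x \<in> P \<Longrightarrow> (\<And>a. a \<in> A \<Longrightarrow> f a \<in> F x) \<Longrightarrow> sum f A \<in> F x"
  using stalk_subspace stalk.subspace_sum by blast

lemma stalk_signed: "x \<in> P \<Longrightarrow> u \<in> F x \<Longrightarrow> signed i u \<in> F x"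
  using stalk_subspace stalk.subspace_neg by (simp add: signed_def)

context
  fixes x y assumes xy: "x \<in> P" "y \<in> P" "x \<le> y"
begin

lemma restrict_mem: "v \<in> F y \<Longrightarrow> R y x v \<in> F x"
  using sheaf xy by (simp add: is_sheaf_def)

lemma restrict_add: "v \<in> F y \<Longrightarrow> w \<in> F y \<Longrightarrow> R y x (v + w) = R y x v + R y x w"
  using sheaf xy by (simp add: is_sheaf_def)

lemma restrict_scale: "v \<in> F y \<Longrightarrow> R y x (scale a v) = scale a (R y x v)"
  using sheaf xy by (simp add: is_sheaf_def)

lemma restrict_zero: "R y x 0 = 0"
  using restrict_add[of 0 0] stalk_zero[OF xy(2)] by simp

lemma restrict_neg:
  assumes "v \<in> F y" shows "R y x (- v) = - R y x v"
proof -
  have "- v \<in> F y" using assms stalk_subspace[OF xy(2)] stalk.subspace_neg by blast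
  then have "R y x v + R y x (- v) = 0" using restrict_add[OF assms] restrict_zero by (metis add.right_inverse)
  then show ?thesis by (metis minus_unique)
qed

lemma restrict_signed: "v \<in> F y \<Longrightarrow> R y x (signed i v) = signed i (R y x v)"
  by (simp add: signed_def restrict_neg)

end

lemma restrict_id: "x \<in> P \<Longrightarrow> v \<in> F x \<Longrightarrow> R x x v = v"
  using sheaf by (simp add: is_sheaf_def)

lemma restrict_trans: "x \<in> P \<Longrightarrow> y \<in> P \<Longrightarrow> z \<in> P \<Longrightarrow> x \<le> y \<Longrightarrow> y \<le> z \<Longrightarrow> v \<in> F z \<Longrightarrow>
    R y x (R z y v) = R z x v"
  using sheaf unfolding is_sheaf_def by blast

definition face_coeff :: "'a list \<Rightarrow> nat \<Rightarrow> 'v \<Rightarrow> 'v" where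
  "face_coeff s i u = (if i = 0 then R (s ! 0) (s ! 1) u else signed i u)"

lemma scale_minus_one_power: "scale ((-1) ^ i) u = signed i u"
  by (cases "even i") (simp_all add: signed_def)

lemma bdry_apply: "bdry scale P R n c t = (if n = 0 then 0 else
   (\<Sum>s\<in>chains P n. \<Sum>i\<in>{0..n}. if face i s = t then face_coeff s i (c s) else 0))"
  unfolding bdry_def face_coeff_def scale_minus_one_power by (rule refl)

abbreviation S :: "nat \<Rightarrow> ('a list \<Rightarrow> 'v) set" where
  "S n \<equiv> chain_space P F n"

lemma chain_space_outside: "c \<in> S n \<Longrightarrow> s \<notin> chains P n \<Longrightarrow> c s = 0"
  by (simp add: chain_space_def)

lemma chain_space_mem: "c \<in> S n \<Longrightarrow> s \<in> chains P n \<Longrightarrow> c s \<in> F (hd s)"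
  by (simp add: chain_space_def)

context
  fixes s n assumes s: "s \<in> chains P (Suc n)"
begin

lemma chains_Suc_facts: "s ! 0 \<in> P" "s ! 1 \<in> P" "s ! 1 \<le> s ! 0" "hd s = s ! 0"
  using s hd_chains_eq[OF s] by (auto simp: mem_chains_nth)

lemma face_coeff_mem: "i \<le> Suc n \<Longrightarrow> u \<in> F (hd s) \<Longrightarrow> face_coeff s i u \<in> F (hd (face i s))"
  using s chains_Suc_facts restrict_mem[of "s ! 1" "s ! 0" u] stalk_signed
  by (auto simp: face_coeff_def hd_face_0 hd_face length_chains)

lemma face_coeff_add:
  "u \<in> F (hd s) \<Longrightarrow> v \<in> F (hd s) \<Longrightarrow> face_coeff s i (u + v) = face_coeff s i u + face_coeff s i v"
  using chains_Suc_facts by (simp add: face_coeff_def restrict_add signed_add)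

lemma face_coeff_zero [simp]: "face_coeff s i 0 = 0"
  using chains_Suc_facts by (simp add: face_coeff_def restrict_zero)

lemma face_coeff_scale: "u \<in> F (hd s) \<Longrightarrow> face_coeff s i (scale a u) = scale a (face_coeff s i u)"
  using chains_Suc_facts by (simp add: face_coeff_def restrict_scale signed_def)

lemma face_coeff_repeat:
  assumes "u \<in> F (hd s)" "i = 0 \<Longrightarrow> s ! 0 = s ! 1"
  shows "face_coeff s i u = signed i u"
  using assms chains_Suc_facts restrict_id by (auto simp: face_coeff_def signed_def)

end

lemma face_coeff_face_coeff:
  assumes s: "s \<in> chains P (Suc (Suc m))" and u: "u \<in> F (hd s)" and ji: "j < i"
    and i: "i \<le> Suc (Suc m)"
  shows "face_coeff (face j s) (i - 1) (face_coeff s j u) = - face_coeff (face i s) j (face_coeff s i u)"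
proof -
  have L: "length s = Suc (Suc (Suc m))" using s by (simp add: length_chains)
  have P: "s ! 0 \<in> P" "s ! 1 \<in> P" "s ! 2 \<in> P" using s by (auto simp: mem_chains_nth)
  have O: "s ! 1 \<le> s ! 0" "s ! 2 \<le> s ! 1" using s by (auto simp: mem_chains_nth)
  have u0: "u \<in> F (s ! 0)" using u hd_chains_eq[OF s] by simp
  consider "j = 0" "i = 1" | "j = 0" "2 \<le> i" | "1 \<le> j" using ji by linarith
  then show ?thesis
  proof cases
    case 1
    have f: "face 0 s ! 0 = s ! 1" "face 0 s ! 1 = s ! 2" "face 1 s ! 0 = s ! 0" "face 1 s ! 1 = s ! 2"
      using L by (simp_all add: nth_face numeral_2_eq_2)
    have "face_coeff (face j s) (i - 1) (face_coeff s j u) = R (s ! 1) (s ! 2) (R (s ! 0) (s ! 1) u)"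
      using 1 f by (simp add: face_coeff_def)
    also have "\<dots> = R (s ! 0) (s ! 2) u" using restrict_trans[OF P(3) P(2) P(1) O(2) O(1) u0] .
    also have "\<dots> = - face_coeff (face i s) j (face_coeff s i u)"
      using 1 f restrict_neg[OF P(3) P(1) order.trans[OF O(2) O(1)] u0]
      by (simp add: face_coeff_def signed_def)
    finally show ?thesis .
  next
    case 2
    have f: "face i s ! 0 = s ! 0" "face i s ! 1 = s ! 1" using L 2 i by (simp_all add: nth_face)
    have "signed i (R (s ! 0) (s ! 1) u) = - signed (i - 1) (R (s ! 0) (s ! 1) u)"
      using 2 signed_Suc[of "i - 1"] by simp
    then show ?thesis using 2 f restrict_signed[OF P(2) P(1) O(1) u0] by (simp add: face_coeff_def)
  next
    case 3
    then show ?thesis using ji by (simp add: face_coeff_def signed_def)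
  qed
qed

definition chain_subspace :: "'a list set \<Rightarrow> ('a list \<Rightarrow> 'v) set" where
  "chain_subspace X = {c. \<forall>s. (s \<in> X \<longrightarrow> c s \<in> F (hd s)) \<and> (s \<notin> X \<longrightarrow> c s = 0)}"

lemma chain_space_eq: "S n = chain_subspace (chains P n)"
  by (simp add: chain_space_def chain_subspace_def)

lemma subspace_chain_subspace:
  assumes "\<And>s. s \<in> X \<Longrightarrow> hd s \<in> P"
  shows "fun_vs.subspace (chain_subspace X)"
  unfolding fun_vs.subspace_def
  using assms by (auto simp: chain_subspace_def fscale_def stalk_zero stalk_add stalk_scale)

lemma subspace_chain_space: "fun_vs.subspace (S n)"
  unfolding chain_space_eq by (rule subspace_chain_subspace) (rule hd_chains_mem)

definition single_chain :: "'a list \<Rightarrow> 'v \<Rightarrow> ('a list \<Rightarrow> 'v)" where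
  "single_chain s v = (\<lambda>t. if t = s then v else 0)"

lemma single_chain_zero [simp]: "single_chain s 0 = 0"
  by (simp add: single_chain_def fun_eq_iff)

lemma single_chain_neg: "single_chain s (- v) = - single_chain s v"
  by (simp add: single_chain_def fun_eq_iff)

lemma single_chain_sum: "single_chain s (sum f A) = (\<Sum>a\<in>A. single_chain s (f a))"
  by (rule ext) (simp add: single_chain_def sum_apply_fun)

lemma single_chain_scale: "single_chain s (scale a v) = fscale scale a (single_chain s v)"
  by (rule ext) (simp add: single_chain_def fscale_def)

lemma inj_single_chain: "inj (single_chain s)"
  by (rule injI) (metis single_chain_def)

lemma single_chain_mem: "s \<in> chains P n \<Longrightarrow> u \<in> F (hd s) \<Longrightarrow> single_chain s u \<in> S n"
  by (auto simp: chain_space_def single_chain_def stalk_zero hd_chains_mem)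

lemma sum_single_chain: "c \<in> chain_subspace X \<Longrightarrow> finite X \<Longrightarrow> c = (\<Sum>s\<in>X. single_chain s (c s))"
  by (rule ext) (auto simp: sum_apply_fun single_chain_def chain_subspace_def)

lemma bdry_mem:
  assumes c: "c \<in> S (Suc n)"
  shows "bdry scale P R (Suc n) c \<in> S n"
  unfolding chain_space_def
proof (intro CollectI allI conjI impI)
  fix t assume t: "t \<in> chains P n"
  have mem: "(if face i s = t then face_coeff s i (c s) else 0) \<in> F (hd t)"
    if s: "s \<in> chains P (Suc n)" and i: "i \<in> {0..Suc n}" for s i
    using face_coeff_mem[OF s _ chain_space_mem[OF c s], of i] i stalk_zero hd_chains_mem[OF t] by auto
  have "(\<Sum>s\<in>chains P (Suc n). \<Sum>i\<in>{0..Suc n}.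
      if face i s = t then face_coeff s i (c s) else 0) \<in> F (hd t)"
    by (intro stalk_sum hd_chains_mem[OF t] mem)
  then show "bdry scale P R (Suc n) c t \<in> F (hd t)"
    unfolding bdry_apply by simp
next
  fix t assume "t \<notin> chains P n"
  then have "face i s \<noteq> t" if "s \<in> chains P (Suc n)" "i \<in> {0..Suc n}" for s i
    using that face_in_chains by fastforce
  then show "bdry scale P R (Suc n) c t = 0" unfolding bdry_apply by simp
qed

lemma bdry_add:
  assumes c: "c \<in> S n" and d: "d \<in> S n"
  shows "bdry scale P R n (c + d) = bdry scale P R n c + bdry scale P R n d"
proof (cases n)
  case (Suc m)
  have "(if face i s = t then face_coeff s i ((c + d) s) else 0) =
      (if face i s = t then face_coeff s i (c s) else 0) + (if face i s = t then face_coeff s i (d s) else 0)"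
    if "s \<in> chains P n" for s i t
    using that face_coeff_add chain_space_mem[OF c] chain_space_mem[OF d] Suc by auto
  then show ?thesis
    unfolding fun_eq_iff bdry_apply plus_fun_apply using Suc by (simp add: sum.distrib)
qed (simp add: bdry_def fun_eq_iff)

lemma bdry_scale:
  assumes c: "c \<in> S n"
  shows "bdry scale P R n (fscale scale a c) = fscale scale a (bdry scale P R n c)"
proof (cases n)
  case (Suc m)
  have "(if face i s = t then face_coeff s i (fscale scale a c s) else 0) =
      scale a (if face i s = t then face_coeff s i (c s) else 0)"
    if "s \<in> chains P n" for s i t
    using that face_coeff_scale chain_space_mem[OF c] Suc by (auto simp: fscale_def)
  then show ?thesis
    unfolding fun_eq_iff bdry_apply using Suc
    by (simp add: fscale_def stalk.scale_sum_right del: sum.cl_ivl_Suc)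
qed (simp add: bdry_def fscale_def fun_eq_iff)

lemma bdry_zero [simp]: "bdry scale P R n 0 = 0"
  using bdry_add[of 0 n 0] fun_vs.subspace_0[OF subspace_chain_space] by simp

lemma bdry_diff:
  assumes "c \<in> S n" "d \<in> S n"
  shows "bdry scale P R n (c - d) = bdry scale P R n c - bdry scale P R n d"
  using bdry_add[of "c - d" n d] assms fun_vs.subspace_diff[OF subspace_chain_space]
  by (simp add: eq_diff_eq)

lemma bdry_sum:
  assumes "finite A" "\<And>a. a \<in> A \<Longrightarrow> g a \<in> S n"
  shows "bdry scale P R n (sum g A) = (\<Sum>a\<in>A. bdry scale P R n (g a))"
  using assms
proof (induction A rule: finite_induct)
  case (insert x A)
  have x: "g x \<in> S n" and A: "sum g A \<in> S n"
    using insert.prems by (auto intro: fun_vs.subspace_sum[OF subspace_chain_space])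
  have "bdry scale P R n (sum g A) = (\<Sum>a\<in>A. bdry scale P R n (g a))"
    using insert by simp
  then show ?case unfolding sum.insert[OF insert.hyps(1,2)] bdry_add[OF x A] by simp
qed simp

lemma bdry_single_chain:
  assumes s: "s \<in> chains P (Suc n)"
  shows "bdry scale P R (Suc n) (single_chain s u)
    = (\<Sum>i\<in>{0..Suc n}. single_chain (face i s) (face_coeff s i u))"
proof (rule ext)
  fix t
  have "bdry scale P R (Suc n) (single_chain s u) t = (\<Sum>s'\<in>chains P (Suc n). \<Sum>i\<in>{0..Suc n}.
      if face i s' = t then face_coeff s' i (single_chain s u s') else 0)"
    by (simp add: bdry_apply del: sum.cl_ivl_Suc)
  also have "\<dots> = (\<Sum>s'\<in>chains P (Suc n).
      if s' = s then (\<Sum>i\<in>{0..Suc n}. if face i s' = t then face_coeff s' i u else 0) else 0)"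
    by (intro sum.cong refl) (auto simp: single_chain_def face_coeff_zero cong: if_cong)
  also have "\<dots> = (\<Sum>i\<in>{0..Suc n}. single_chain (face i s) (face_coeff s i u)) t"
    using s unfolding sum_apply_fun by (simp add: finite_chains single_chain_def eq_commute)
  finally show "bdry scale P R (Suc n) (single_chain s u) t
      = (\<Sum>i\<in>{0..Suc n}. single_chain (face i s) (face_coeff s i u)) t" .
qed

text \<open>The terms of \<open>d (d s)\<close> cancel in pairs \<open>(i, j)\<close>, \<open>(j, i - 1)\<close> with \<open>j < i\<close>,
  by the simplicial identity \<open>face_face\<close>.\<close>

lemma bdry_bdry_single_chain:
  assumes s: "s \<in> chains P (Suc (Suc m))" and u: "u \<in> F (hd s)"
  shows "bdry scale P R (Suc m) (bdry scale P R (Suc (Suc m)) (single_chain s u)) = 0"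
proof -
  define T where "T p = single_chain (face (snd p) (face (fst p) s))
      (face_coeff (face (fst p) s) (snd p) (face_coeff s (fst p) u))" for p
  define A where "A = {p \<in> {0..Suc (Suc m)} \<times> {0..Suc m}. snd p < fst p}"
  define B where "B = {p \<in> {0..Suc (Suc m)} \<times> {0..Suc m}. fst p \<le> snd p}"
  have L: "length s = Suc (Suc (Suc m))" using s by (simp add: length_chains)
  have "bdry scale P R (Suc m) (bdry scale P R (Suc (Suc m)) (single_chain s u))
      = (\<Sum>i\<in>{0..Suc (Suc m)}. \<Sum>j\<in>{0..Suc m}. T (i, j))"
    unfolding bdry_single_chain[OF s] T_def
    using face_in_chains[OF s] face_coeff_mem[OF s _ u]
    by (subst bdry_sum) (auto intro!: sum.cong single_chain_mem simp: bdry_single_chain)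
  also have "\<dots> = sum T (A \<union> B)"
    unfolding sum.cartesian_product by (rule sum.cong) (auto simp: A_def B_def)
  also have "\<dots> = sum T A + sum T B"
    by (rule sum.union_disjoint) (auto simp: A_def B_def)
  also have "sum T B = (\<Sum>p\<in>A. T (snd p, fst p - 1))"
    by (rule sym, rule sum.reindex_bij_witness[where i="\<lambda>p. (snd p + 1, fst p)"
          and j="\<lambda>p. (snd p, fst p - 1)"]) (auto simp: A_def B_def)
  also have "sum T A + (\<Sum>p\<in>A. T (snd p, fst p - 1)) = 0"
  proof -
    have "T p + T (snd p, fst p - 1) = 0" if "p \<in> A" for p
      using that face_face[of "snd p" "fst p" s] face_coeff_face_coeff[OF s u, of "snd p" "fst p"] L
      by (auto simp: A_def T_def single_chain_neg)
    then show ?thesis by (simp add: sum.distrib[symmetric])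
  qed
  finally show ?thesis .
qed

lemma bdry_bdry:
  assumes c: "c \<in> S (Suc n)"
  shows "bdry scale P R n (bdry scale P R (Suc n) c) = 0"
proof (cases n)
  case (Suc m)
  let ?X = "chains P (Suc n)"
  have single: "single_chain s (c s) \<in> S (Suc n)" if "s \<in> ?X" for s
    using that chain_space_mem[OF c] single_chain_mem by blast
  have "c = (\<Sum>s\<in>?X. single_chain s (c s))"
    using c by (intro sum_single_chain) (simp_all add: chain_space_eq finite_chains)
  then have "bdry scale P R (Suc n) c = bdry scale P R (Suc n) (\<Sum>s\<in>?X. single_chain s (c s))"
    by (rule arg_cong)
  also have "\<dots> = (\<Sum>s\<in>?X. bdry scale P R (Suc n) (single_chain s (c s)))"
    by (rule bdry_sum[OF finite_chains single])
  finally have "bdry scale P R n (bdry scale P R (Suc n) c)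
      = (\<Sum>s\<in>?X. bdry scale P R n (bdry scale P R (Suc n) (single_chain s (c s))))"
    using single bdry_mem by (simp add: bdry_sum finite_chains)
  also have "\<dots> = 0"
    using Suc chain_space_mem[OF c] bdry_bdry_single_chain by (simp add: sum.neutral)
  finally show ?thesis .
qed (simp add: bdry_def fun_eq_iff)

end

context finite_sheaf
begin

definition stalk_basis :: "'a \<Rightarrow> 'v set" where
  "stalk_basis x = (SOME B. B \<subseteq> F x \<and> stalk.independent B \<and> F x \<subseteq> stalk.span B
     \<and> card B = stalk.dim (F x) \<and> finite B)"

lemma stalk_basis:
  assumes "x \<in> P"
  shows "stalk_basis x \<subseteq> F x" "stalk.independent (stalk_basis x)" "F x \<subseteq> stalk.span (stalk_basis x)"
    "card (stalk_basis x) = stalk.dim (F x)" "finite (stalk_basis x)"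
proof -
  obtain A where "F x \<subseteq> stalk.span A" "finite A"
    using finite_dim assms unfolding finite_dim_stalks_def by (metis order_refl)
  then obtain B where "B \<subseteq> F x" "stalk.independent B" "F x \<subseteq> stalk.span B"
      "card B = stalk.dim (F x)" "finite B"
    by (rule stalk.finite_basis_exists)
  then have "\<exists>B. B \<subseteq> F x \<and> stalk.independent B \<and> F x \<subseteq> stalk.span B
      \<and> card B = stalk.dim (F x) \<and> finite B"
    by blast
  then have "stalk_basis x \<subseteq> F x \<and> stalk.independent (stalk_basis x) \<and> F x \<subseteq> stalk.span (stalk_basis x)
      \<and> card (stalk_basis x) = stalk.dim (F x) \<and> finite (stalk_basis x)"
    unfolding stalk_basis_def by (rule someI_ex)
  then show "stalk_basis x \<subseteq> F x" "stalk.independent (stalk_basis x)" "F x \<subseteq> stalk.span (stalk_basis x)"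
    "card (stalk_basis x) = stalk.dim (F x)" "finite (stalk_basis x)" by auto
qed

definition chain_basis :: "'a list set \<Rightarrow> ('a list \<Rightarrow> 'v) set" where
  "chain_basis X = (\<Union>s\<in>X. single_chain s ` stalk_basis (hd s))"

context
  fixes X assumes X: "finite X" "\<And>s. s \<in> X \<Longrightarrow> hd s \<in> P"
begin

lemma chain_basis_subset: "chain_basis X \<subseteq> chain_subspace X"
  using stalk_basis(1) X(2) stalk_zero by (fastforce simp: chain_basis_def chain_subspace_def single_chain_def)

lemma chain_subspace_subset_span: "chain_subspace X \<subseteq> fun_vs.span (chain_basis X)"
proof
  fix c assume c: "c \<in> chain_subspace X"
  have "single_chain s (c s) \<in> fun_vs.span (chain_basis X)" if s: "s \<in> X" for s
  proof -
    have "c s \<in> stalk.span (stalk_basis (hd s))"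
      using c s stalk_basis(3)[OF X(2)[OF s]] by (auto simp: chain_subspace_def)
    then obtain k where "c s = (\<Sum>b\<in>stalk_basis (hd s). scale (k b) b)"
      using stalk.span_finite[OF stalk_basis(5)[OF X(2)[OF s]]] by auto
    then have "single_chain s (c s) = (\<Sum>b\<in>stalk_basis (hd s). fscale scale (k b) (single_chain s b))"
      by (simp add: single_chain_sum single_chain_scale)
    also have "\<dots> \<in> fun_vs.span (chain_basis X)"
      using s by (intro fun_vs.span_sum fun_vs.span_scale fun_vs.span_base) (auto simp: chain_basis_def)
    finally show ?thesis .
  qed
  then have "(\<Sum>s\<in>X. single_chain s (c s)) \<in> fun_vs.span (chain_basis X)"
    by (rule fun_vs.span_sum)
  then show "c \<in> fun_vs.span (chain_basis X)"
    using sum_single_chain[OF c X(1)] by simp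
qed

lemma independent_chain_basis: "fun_vs.independent (chain_basis X)"
  unfolding fun_vs.independent_explicit_finite_subsets
proof (intro allI impI ballI)
  fix T u w0
  assume T: "T \<subseteq> chain_basis X" "finite T" and z: "(\<Sum>w\<in>T. fscale scale (u w) w) = 0"
    and w0: "w0 \<in> T"
  obtain s0 b0 where sb: "s0 \<in> X" "b0 \<in> stalk_basis (hd s0)" "w0 = single_chain s0 b0"
    using T w0 by (auto simp: chain_basis_def)
  let ?T0 = "{b \<in> stalk_basis (hd s0). single_chain s0 b \<in> T}"
  have inj: "inj_on (single_chain s0) ?T0" using inj_single_chain by (rule inj_on_subset) simp
  have "0 = (\<Sum>w\<in>T. scale (u w) (w s0))"
    using fun_cong[OF z, of s0] by (simp add: sum_apply_fun fscale_def)
  also have "\<dots> = (\<Sum>w\<in>single_chain s0 ` ?T0. scale (u w) (w s0))"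
  proof (rule sum.mono_neutral_right[OF T(2)])
    show "\<forall>w\<in>T - single_chain s0 ` ?T0. scale (u w) (w s0) = 0"
    proof
      fix w assume w: "w \<in> T - single_chain s0 ` ?T0"
      then obtain s b where sb': "b \<in> stalk_basis (hd s)" "w = single_chain s b"
        using T(1) by (auto simp: chain_basis_def)
      then have "s \<noteq> s0" using w by auto
      then show "scale (u w) (w s0) = 0" using sb' by (simp add: single_chain_def)
    qed
  qed auto
  also have "\<dots> = (\<Sum>b\<in>?T0. scale (u (single_chain s0 b)) (single_chain s0 b s0))"
    by (simp add: sum.reindex[OF inj])
  also have "\<dots> = (\<Sum>b\<in>?T0. scale (u (single_chain s0 b)) b)"
    by (simp add: single_chain_def)
  finally have "(\<Sum>b\<in>?T0. scale (u (single_chain s0 b)) b) = 0" ..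
  moreover have "b0 \<in> ?T0" using sb w0 by simp
  ultimately have "u (single_chain s0 b0) = 0"
    using stalk.independent_coeff_zero[OF stalk_basis(2)[OF X(2)[OF sb(1)]], of ?T0]
      stalk_basis(5)[OF X(2)[OF sb(1)]] by simp
  then show "u w0 = 0" using sb by simp
qed

lemma card_chain_basis: "card (chain_basis X) = (\<Sum>s\<in>X. stalk.dim (F (hd s)))"
proof -
  have "single_chain s ` stalk_basis (hd s) \<inter> single_chain s' ` stalk_basis (hd s') = {}"
    if "s \<in> X" "s' \<in> X" "s \<noteq> s'" for s s'
  proof -
    have "0 \<notin> stalk_basis (hd s)" using stalk_basis(2)[OF X(2)] that stalk.dependent_zero by blast
    then show ?thesis using that by (auto simp: single_chain_def fun_eq_iff) metis
  qed
  then have "card (chain_basis X) = (\<Sum>s\<in>X. card (single_chain s ` stalk_basis (hd s)))"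
    unfolding chain_basis_def using X stalk_basis(5) by (intro card_UN_disjoint) auto
  also have "\<dots> = (\<Sum>s\<in>X. stalk.dim (F (hd s)))"
    using X(2) stalk_basis(4)
    by (intro sum.cong refl) (simp add: card_image[OF inj_on_subset[OF inj_single_chain subset_UNIV]])
  finally show ?thesis .
qed

lemma dim_chain_subspace: "fun_vs.dim (chain_subspace X) = (\<Sum>s\<in>X. stalk.dim (F (hd s)))"
  using fun_vs.dim_unique[OF chain_basis_subset chain_subspace_subset_span independent_chain_basis]
    card_chain_basis by simp

lemma finite_dim_chain_subspace: "\<exists>A. finite A \<and> chain_subspace X \<subseteq> fun_vs.span A"
proof -
  have "finite (chain_basis X)" using X stalk_basis(5) by (simp add: chain_basis_def)
  then show ?thesis using chain_subspace_subset_span by blast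
qed

end

end

section \<open>Normalized and degenerate chains\<close>

context finite_sheaf
begin

abbreviation N :: "nat \<Rightarrow> ('a list \<Rightarrow> 'v) set" where
  "N n \<equiv> chain_subspace {s \<in> chains P n. distinct s}"

abbreviation D :: "nat \<Rightarrow> ('a list \<Rightarrow> 'v) set" where
  "D n \<equiv> chain_subspace {s \<in> chains P n. \<not> distinct s}"

lemma N_subset: "N n \<subseteq> S n" and D_subset: "D n \<subseteq> S n"
  by (auto simp: chain_space_eq chain_subspace_def stalk_zero hd_chains_mem)

lemma subspace_N: "fun_vs.subspace (N n)" and subspace_D: "fun_vs.subspace (D n)"
  by (auto intro: subspace_chain_subspace hd_chains_mem)

lemma finite_dim_S: "\<exists>A. finite A \<and> S n \<subseteq> fun_vs.span A"
  unfolding chain_space_eq by (rule finite_dim_chain_subspace) (auto simp: finite_chains hd_chains_mem)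

definition normalize :: "('a list \<Rightarrow> 'v) \<Rightarrow> ('a list \<Rightarrow> 'v)" where
  "normalize c = (\<lambda>s. if distinct s then c s else 0)"

lemma normalize_add: "normalize (c + d) = normalize c + normalize d"
  by (simp add: normalize_def fun_eq_iff)

lemma normalize_scale: "normalize (fscale scale a c) = fscale scale a (normalize c)"
  by (simp add: normalize_def fscale_def fun_eq_iff)

lemma normalize_zero [simp]: "normalize 0 = 0"
  by (simp add: normalize_def fun_eq_iff)

lemma normalize_mem_N: "c \<in> S n \<Longrightarrow> normalize c \<in> N n"
  by (auto simp: normalize_def chain_space_eq chain_subspace_def)

lemma diff_normalize_mem_D: "c \<in> S n \<Longrightarrow> c - normalize c \<in> D n"
  by (auto simp: normalize_def chain_space_eq chain_subspace_def)

lemma normalize_N: "c \<in> N n \<Longrightarrow> normalize c = c"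
  by (auto simp: normalize_def chain_subspace_def fun_eq_iff)

lemma normalize_D: "c \<in> D n \<Longrightarrow> normalize c = 0"
  by (auto simp: normalize_def chain_subspace_def fun_eq_iff)

lemma normalize_eq_0_iff: "c \<in> S n \<Longrightarrow> normalize c = 0 \<longleftrightarrow> c \<in> D n"
  using diff_normalize_mem_D normalize_D by fastforce

lemma bdry_N:
  assumes c: "c \<in> N (Suc n)"
  shows "bdry scale P R (Suc n) c \<in> N n"
proof -
  have "bdry scale P R (Suc n) c t = 0" if "\<not> distinct t" for t
  proof -
    have "(if face i s = t then face_coeff s i (c s) else 0) = 0" if s: "s \<in> chains P (Suc n)" for s i
      using c distinct_face[of s i] \<open>\<not> distinct t\<close> face_coeff_zero[OF s]
      by (cases "distinct s") (auto simp: chain_subspace_def)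
    then show ?thesis unfolding bdry_apply by simp
  qed
  then show ?thesis
    using bdry_mem[of c n] N_subset c by (auto simp: chain_space_eq chain_subspace_def)
qed

text \<open>In a chain with two equal adjacent entries, the two faces deleting them coincide and
  their coefficients cancel; every other face still has a repeated entry.\<close>

lemma degenerate_bdry_vanishes_at_distinct:
  assumes s: "s \<in> chains P (Suc n)" and nd: "\<not> distinct s" and t: "distinct t" and u: "u \<in> F (hd s)"
  shows "(\<Sum>i\<in>{0..Suc n}. if face i s = t then face_coeff s i u else 0) = 0"
proof -
  have L: "length s = Suc (Suc n)" using s by (simp add: length_chains)
  define j where "j = first_repeat s"
  have j: "Suc j < length s" "s ! j = s ! Suc j"
    using first_repeat[OF chains_descending[OF s] nd] by (simp_all add: j_def)
  have "(\<Sum>i\<in>{0..Suc n}. if face i s = t then face_coeff s i u else 0)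
      = (\<Sum>i\<in>{j, Suc j}. if face i s = t then face_coeff s i u else 0)"
  proof (rule sum.mono_neutral_right)
    show "\<forall>i\<in>{0..Suc n} - {j, Suc j}. (if face i s = t then face_coeff s i u else 0) = 0"
      using not_distinct_face[OF j] t L by auto
  qed (use j L in auto)
  also have "\<dots> = (if face j s = t then face_coeff s j u + face_coeff s (Suc j) u else 0)"
  proof -
    have "face (Suc j) s = face j s"
      by (rule face_eq_if_constant_run) (use j in \<open>auto simp: le_Suc_eq\<close>)
    then show ?thesis by simp
  qed
  also have "face_coeff s j u + face_coeff s (Suc j) u = 0"
  proof -
    have "j = 0 \<Longrightarrow> s ! 0 = s ! 1" using j by simp
    then show ?thesis
      using face_coeff_repeat[OF s u, of j] face_coeff_repeat[OF s u, of "Suc j"] by (simp add: signed_Suc)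
  qed
  finally show ?thesis by simp
qed

lemma bdry_D:
  assumes c: "c \<in> D (Suc n)"
  shows "bdry scale P R (Suc n) c \<in> D n"
proof -
  have cS: "c \<in> S (Suc n)" using c D_subset by blast
  have "bdry scale P R (Suc n) c t = 0" if t: "distinct t" for t
  proof -
    have "(\<Sum>i\<in>{0..Suc n}. if face i s = t then face_coeff s i (c s) else 0) = 0"
      if s: "s \<in> chains P (Suc n)" for s
    proof (cases "distinct s")
      case True
      then have "c s = 0" using c by (auto simp: chain_subspace_def)
      then show ?thesis using face_coeff_zero[OF s] by (simp cong: if_cong)
    qed (use degenerate_bdry_vanishes_at_distinct[OF s _ t chain_space_mem[OF cS s]] in simp)
    then show ?thesis unfolding bdry_apply by simp
  qed
  then show ?thesis using bdry_mem[OF cS] by (auto simp: chain_space_eq chain_subspace_def)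
qed

lemma normalize_bdry:
  assumes c: "c \<in> S n"
  shows "normalize (bdry scale P R n c) = bdry scale P R n (normalize c)"
proof (cases n)
  case (Suc m)
  have N: "normalize c \<in> N (Suc m)" and D: "c - normalize c \<in> D (Suc m)"
    using c Suc normalize_mem_N diff_normalize_mem_D by auto
  have "bdry scale P R n c = bdry scale P R n (normalize c) + bdry scale P R n (c - normalize c)"
    using bdry_add[of "normalize c" n "c - normalize c"] N D N_subset D_subset Suc by auto
  then show ?thesis
    using normalize_N[OF bdry_N[OF N]] normalize_D[OF bdry_D[OF D]] Suc by (simp add: normalize_add)
qed (simp add: bdry_def normalize_def)

end

section \<open>The degenerate subcomplex is acyclic\<close>

definition even_first_run :: "'a list \<Rightarrow> bool" where
  "even_first_run s \<longleftrightarrow> \<not> distinct s \<and> even (count_list s (s ! first_repeat s))"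

context finite_sheaf
begin

definition homotopy :: "nat \<Rightarrow> ('a list \<Rightarrow> 'v) \<Rightarrow> ('a list \<Rightarrow> 'v)" where
  "homotopy n c = (\<lambda>t. \<Sum>s\<in>chains P n.
     if even_first_run s \<and> degen (first_repeat s) s = t then signed (first_repeat s) (c s) else 0)"

lemma homotopy_add: "homotopy n (c + d) = homotopy n c + homotopy n d"
  by (rule ext) (simp add: homotopy_def signed_add sum.distrib[symmetric] if_distrib cong: if_cong)

lemma homotopy_zero [simp]: "homotopy n 0 = 0"
  by (rule ext) (simp add: homotopy_def cong: if_cong)

lemma homotopy_sum: "homotopy n (sum g A) = (\<Sum>a\<in>A. homotopy n (g a))"
proof (induction A rule: infinite_finite_induct)
  case (insert x A)
  show ?case unfolding sum.insert[OF insert.hyps(1,2)] homotopy_add insert.IH ..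
next
  case (infinite A)
  then show ?case by (simp only: sum.infinite[OF infinite] homotopy_zero)
qed (simp only: sum.empty homotopy_zero)

lemma even_first_run_degen:
  assumes s: "s \<in> chains P n" and h: "even_first_run s"
  shows "first_repeat s < n" "degen (first_repeat s) s \<in> chains P (Suc n)"
    "hd (degen (first_repeat s) s) = hd s" "\<not> distinct (degen (first_repeat s) s)"
proof -
  have nd: "\<not> distinct s" using h by (simp add: even_first_run_def)
  have f: "Suc (first_repeat s) < length s" using first_repeat[OF chains_descending[OF s] nd] by simp
  then show fn: "first_repeat s < n" using length_chains[OF s] by simp
  then show "degen (first_repeat s) s \<in> chains P (Suc n)" using degen_in_chains[OF s] by simp
  show "hd (degen (first_repeat s) s) = hd s" using hd_degen[OF Suc_lessD[OF f]] .
  show "\<not> distinct (degen (first_repeat s) s)"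
  proof
    assume "distinct (degen (first_repeat s) s)"
    then have "card (set s) = Suc (length s)"
      using distinct_card set_degen[OF Suc_lessD[OF f]] length_degen[OF Suc_lessD[OF f]] by metis
    then show False using card_length[of s] by simp
  qed
qed

lemma homotopy_mem_D:
  assumes c: "c \<in> S n"
  shows "homotopy n c \<in> D (Suc n)"
  unfolding chain_subspace_def
proof (intro CollectI allI conjI impI)
  fix t assume t: "t \<in> {s \<in> chains P (Suc n). \<not> distinct s}"
  have "(if even_first_run s \<and> degen (first_repeat s) s = t then signed (first_repeat s) (c s) else 0)
      \<in> F (hd t)" if s: "s \<in> chains P n" for s
    using even_first_run_degen[OF s] chain_space_mem[OF c s] stalk_signed[OF hd_chains_mem[OF s]]
      stalk_zero[OF hd_chains_mem[of t P "Suc n"]] t by auto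
  then show "homotopy n c t \<in> F (hd t)"
    unfolding homotopy_def using t by (intro stalk_sum hd_chains_mem[of t P "Suc n"]) auto
next
  fix t assume "t \<notin> {s \<in> chains P (Suc n). \<not> distinct s}"
  then show "homotopy n c t = 0"
    unfolding homotopy_def using even_first_run_degen by (intro sum.neutral) auto
qed

lemma homotopy_single_chain:
  assumes s: "s \<in> chains P n"
  shows "homotopy n (single_chain s u)
    = (if even_first_run s then single_chain (degen (first_repeat s) s) (signed (first_repeat s) u) else 0)"
proof (rule ext)
  fix t
  have "homotopy n (single_chain s u) t = (\<Sum>s'\<in>chains P n. if s' = s then
      (if even_first_run s' \<and> degen (first_repeat s') s' = t then signed (first_repeat s') u else 0) else 0)"
    unfolding homotopy_def by (intro sum.cong refl) (auto simp: single_chain_def)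
  then show "homotopy n (single_chain s u) t = (if even_first_run s
      then single_chain (degen (first_repeat s) s) (signed (first_repeat s) u) else 0) t"
    using s by (auto simp: finite_chains single_chain_def)
qed

lemma homotopy_bdry_single_chain:
  assumes s: "s \<in> chains P (Suc n)"
  shows "homotopy n (bdry scale P R (Suc n) (single_chain s u)) t = (\<Sum>i\<in>{0..Suc n}.
     if even_first_run (face i s) \<and> degen (first_repeat (face i s)) (face i s) = t
     then signed (first_repeat (face i s)) (face_coeff s i u) else 0)"
proof -
  have "homotopy n (bdry scale P R (Suc n) (single_chain s u))
      = (\<Sum>i\<in>{0..Suc n}. homotopy n (single_chain (face i s) (face_coeff s i u)))"
    unfolding bdry_single_chain[OF s] homotopy_sum ..
  also have "\<dots> = (\<Sum>i\<in>{0..Suc n}. if even_first_run (face i s) then single_chain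
      (degen (first_repeat (face i s)) (face i s)) (signed (first_repeat (face i s)) (face_coeff s i u)) else 0)"
    using face_in_chains[OF s] by (intro sum.cong refl homotopy_single_chain) auto
  finally show ?thesis unfolding sum_apply_fun by (auto simp: single_chain_def intro!: sum.cong)
qed

lemma bdry_homotopy_single_chain:
  assumes s: "s \<in> chains P (Suc n)"
  shows "bdry scale P R (Suc (Suc n)) (homotopy (Suc n) (single_chain s u)) t
    = (if even_first_run s then (\<Sum>i\<in>{0..Suc (Suc n)}. if face i (degen (first_repeat s) s) = t
        then face_coeff (degen (first_repeat s) s) i (signed (first_repeat s) u) else 0) else 0)"
proof (cases "even_first_run s")
  case True
  then have "bdry scale P R (Suc (Suc n)) (homotopy (Suc n) (single_chain s u)) =
      bdry scale P R (Suc (Suc n)) (single_chain (degen (first_repeat s) s) (signed (first_repeat s) u))"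
    by (simp add: homotopy_single_chain[OF s])
  also have "\<dots> = (\<Sum>i\<in>{0..Suc (Suc n)}. single_chain (face i (degen (first_repeat s) s))
      (face_coeff (degen (first_repeat s) s) i (signed (first_repeat s) u)))"
    using even_first_run_degen[OF s True] by (intro bdry_single_chain) simp
  finally show ?thesis using True unfolding sum_apply_fun by (auto simp: single_chain_def intro!: sum.cong)
qed (simp add: homotopy_single_chain[OF s])

end

text \<open>Let the first repeated entry of \<open>s\<close> occupy the positions \<open>rpos \<le> i < rpos + rlen\<close>. In
  \<open>(d h + h d) (u\<cdot>s)\<close>, evaluated at a chain \<open>t\<close> with at least as many distinct entries as \<open>s\<close>,
  faces deleting an entry before the run lose a distinct entry, faces after the run cancel between
  \<open>d h\<close> and \<open>h d\<close>, and the alternating sums over the run leave exactly \<open>u\<cdot>s\<close>.\<close>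

locale degenerate_chain = finite_sheaf scale P F R
    for scale :: "'k::field \<Rightarrow> 'v::ab_group_add \<Rightarrow> 'v" and P :: "'a::{finite,order} set" and F R +
  fixes s :: "'a list" and n :: nat and u :: 'v and t :: "'a list"
  assumes chain: "s \<in> chains P (Suc n)" and not_distinct: "\<not> distinct s" and stalk: "u \<in> F (hd s)"
    and card_le: "card (set s) \<le> card (set t)"
begin

abbreviation rpos :: nat where
  "rpos \<equiv> first_repeat s"

abbreviation rlen :: nat where
  "rlen \<equiv> count_list s (s ! rpos)"

definition dh_term :: "nat \<Rightarrow> 'v" where
  "dh_term i = (if face i (degen rpos s) = t then face_coeff (degen rpos s) i (signed rpos u) else 0)"

definition hd_term :: "nat \<Rightarrow> 'v" where
  "hd_term i = (if even_first_run (face i s) \<and> degen (first_repeat (face i s)) (face i s) = t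
     then signed (first_repeat (face i s)) (face_coeff s i u) else 0)"

lemma length_s: "length s = Suc (Suc n)"
  using chain by (rule length_chains)

lemmas rpos = first_repeat[OF chains_descending[OF chain] not_distinct]
lemmas rlen = first_repeat_run_bounds[OF chains_descending[OF chain] not_distinct]
lemmas before_rpos = before_first_repeat[OF chains_descending[OF chain] not_distinct]
lemmas unique_before_rpos = unique_before_first_repeat[OF chains_descending[OF chain] not_distinct]
lemmas nth_eq_rpos_iff = nth_eq_first_repeat_iff[OF chains_descending[OF chain] not_distinct]

lemma nth_run: "rpos \<le> m \<Longrightarrow> m < rpos + rlen \<Longrightarrow> s ! m = s ! rpos"
  using nth_eq_rpos_iff[of m] rlen(2) by simp

lemma first_repeat_face:
  assumes i: "i < length s" and pos: "Suc rpos < i \<or> (i = rpos \<and> 3 \<le> rlen)"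
  shows "first_repeat (face i s) = rpos" "\<not> distinct (face i s)" "face i s ! rpos = s ! rpos"
proof -
  have len: "Suc rpos < length (face i s)"
    using pos i rlen(2) by auto
  have same: "face i s ! k = s ! k" if "k < rpos" for k
    using that pos i by (auto simp: nth_face)
  have "face i s ! rpos = s ! rpos \<and> face i s ! Suc rpos = s ! rpos"
  proof (cases "i = rpos")
    case True
    then have "s ! Suc rpos = s ! rpos" "s ! Suc (Suc rpos) = s ! rpos"
      using pos rlen(2) nth_eq_rpos_iff[of "Suc rpos"] nth_eq_rpos_iff[of "Suc (Suc rpos)"] by auto
    then show ?thesis using True len i by (simp add: nth_face)
  next
    case False
    then show ?thesis using pos i len rpos(2) by (simp add: nth_face)
  qed
  moreover have "face i s ! k \<noteq> face i s ! Suc k" if k: "k < rpos" for k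
  proof -
    have "face i s ! Suc k = s ! Suc k"
    proof (cases "Suc k < rpos")
      case False
      then have "Suc k = rpos" using k by simp
      then show ?thesis using calculation by simp
    qed (rule same)
    then show ?thesis using same[OF k] before_rpos[OF k] by simp
  qed
  ultimately show "first_repeat (face i s) = rpos" "face i s ! rpos = s ! rpos"
    using first_repeat_eqI[OF len] by auto
  show "\<not> distinct (face i s)"
    using len \<open>face i s ! rpos = s ! rpos \<and> face i s ! Suc rpos = s ! rpos\<close>
      nth_eq_iff_index_eq[of "face i s" rpos "Suc rpos"] by auto
qed

lemma even_first_run_face:
  assumes "i < length s" "Suc rpos < i \<or> (i = rpos \<and> 3 \<le> rlen)"
  shows "even_first_run (face i s) \<longleftrightarrow> even (rlen - (if s ! i = s ! rpos then 1 else 0))"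
  using first_repeat_face[OF assms] count_face[OF assms(1)] by (simp add: even_first_run_def)

lemma hd_term_before_run:
  assumes i: "i < rpos"
  shows "hd_term i = 0"
proof -
  have "card (set (face i s)) < card (set t)"
    using card_set_face_less[of i s] unique_before_rpos[OF i] i rpos(1) card_le by fastforce
  moreover have "set (degen (first_repeat (face i s)) (face i s)) = set (face i s)"
    if "even_first_run (face i s)"
    using even_first_run_degen(1)[OF face_in_chains[OF chain] that] i rpos(1) length_s
    by (intro set_degen) (simp add: length_chains[OF face_in_chains[OF chain]])
  ultimately show ?thesis by (auto simp: hd_term_def)
qed

lemma dh_term_before_run:
  assumes i: "i < rpos"
  shows "dh_term i = 0"
proof -
  have l: "rpos < length s" using rpos(1) by simp
  have "m = i" if "m < length (degen rpos s)" "degen rpos s ! m = degen rpos s ! i" for m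
  proof (cases "m \<le> rpos")
    case True
    then show ?thesis using that i l unique_before_rpos[OF i, of m] by (simp add: nth_degen)
  next
    case False
    then show ?thesis using that i l unique_before_rpos[OF i, of "m - 1"] by (simp add: nth_degen)
  qed
  then have "card (set (face i (degen rpos s))) < card (set (degen rpos s))"
    using i l by (intro card_set_face_less) auto
  then have "face i (degen rpos s) \<noteq> t" using set_degen[OF l] card_le by auto
  then show ?thesis by (simp add: dh_term_def)
qed

lemma hd_term_after_run:
  assumes i: "rpos + rlen \<le> i" "i < length s"
  shows "hd_term i = (if even rlen \<and> face (Suc i) (degen rpos s) = t then signed rpos (signed i u) else 0)"
proof -
  have pos: "Suc rpos < i" using i rlen(1) by simp
  have "s ! i \<noteq> s ! rpos" using nth_eq_rpos_iff[OF i(2)] i(1) by simp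
  then have "even_first_run (face i s) \<longleftrightarrow> even rlen" using even_first_run_face[OF i(2)] pos by simp
  moreover have "degen rpos (face i s) = face (Suc i) (degen rpos s)"
    using face_degen_after_run[of rpos "Suc i" s] pos i(2) by simp
  moreover have "face_coeff s i u = signed i u" using pos by (simp add: face_coeff_def)
  ultimately show ?thesis using first_repeat_face(1)[OF i(2)] pos by (simp add: hd_term_def)
qed

lemma after_run_cancel:
  assumes "rpos + rlen \<le> i" "i < length s"
  shows "(if even rlen then dh_term (Suc i) else 0) + hd_term i = 0"
  using hd_term_after_run[OF assms] by (auto simp: dh_term_def face_coeff_def signed_signed signed_def)

lemma sum_hd_term_run: "(\<Sum>i\<in>{rpos..<rpos + rlen}. hd_term i) = (if even rlen then 0 else if t = s then u else 0)"
proof -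
  let ?p = "face rpos s"
  have face_eq: "face i s = ?p" if i: "i \<in> {rpos..<rpos + rlen}" for i
  proof (rule face_eq_if_constant_run)
    show "rpos \<le> i" "i < length s" using i rlen(2) by auto
    show "s ! m = s ! rpos" if "rpos \<le> m" "m \<le> i" for m
      using that i by (intro nth_run) auto
  qed
  have coeff: "face_coeff s i u = signed i u" if "i \<in> {rpos..<rpos + rlen}" for i
    using that rpos(2) by (intro face_coeff_repeat[OF chain stalk]) auto
  have "(\<Sum>i\<in>{rpos..<rpos + rlen}. hd_term i) = (\<Sum>i\<in>{rpos..<rpos + rlen}.
      if even_first_run ?p \<and> degen (first_repeat ?p) ?p = t then signed (first_repeat ?p) (signed i u) else 0)"
  proof (rule sum.cong[OF refl])
    fix i assume i: "i \<in> {rpos..<rpos + rlen}"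
    show "hd_term i = (if even_first_run ?p \<and> degen (first_repeat ?p) ?p = t
        then signed (first_repeat ?p) (signed i u) else 0)"
      unfolding hd_term_def face_eq[OF i] coeff[OF i] ..
  qed
  also have "\<dots> = (if even_first_run ?p \<and> degen (first_repeat ?p) ?p = t
      then signed (first_repeat ?p) (\<Sum>i\<in>{rpos..<rpos + rlen}. signed i u) else 0)"
    by (simp only: sum_if_const_cond signed_sum)
  also have "(\<Sum>i\<in>{rpos..<rpos + rlen}. signed i u) = (if even rlen then 0 else signed rpos u)"
    by (rule sum_signed_interval)
  finally have sum: "(\<Sum>i\<in>{rpos..<rpos + rlen}. hd_term i) = (if even_first_run ?p \<and> degen (first_repeat ?p) ?p = t
      then signed (first_repeat ?p) (if even rlen then 0 else signed rpos u) else 0)" .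
  show ?thesis
  proof (cases "even rlen")
    case False
    then have "3 \<le> rlen" using rlen(1) by presburger
    then have "first_repeat ?p = rpos" "even_first_run ?p"
      using first_repeat_face[of rpos] even_first_run_face[of rpos] False rpos(1) by auto
    moreover have "degen rpos ?p = s" using degen_face[OF rpos] .
    ultimately show ?thesis using sum False by auto
  qed (use sum in simp)
qed

lemma sum_dh_term_run:
  assumes "even rlen"
  shows "(\<Sum>i\<in>{rpos..<Suc (rpos + rlen)}. dh_term i) = (if t = s then u else 0)"
proof -
  have l: "rpos < length s" using rpos(1) by simp
  have degen: "degen rpos s \<in> chains P (Suc (Suc n))"
    using degen_in_chains[OF chain, of rpos] l length_s by simp
  have face_eq: "face i (degen rpos s) = s" if i: "i \<in> {rpos..<Suc (rpos + rlen)}" for i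
  proof (rule face_degen_within_run)
    show "rpos \<le> i" "i < Suc (length s)" "rpos < length s" using i rlen(2) l by auto
    show "s ! m = s ! rpos" if "rpos \<le> m" "m < i" for m
      using that i by (intro nth_run) auto
  qed
  have "signed rpos u \<in> F (hd (degen rpos s))"
    using hd_degen[OF l] stalk stalk_signed hd_chains_mem[OF chain] by simp
  then have coeff: "face_coeff (degen rpos s) i (signed rpos u) = signed i (signed rpos u)"
    if "i \<in> {rpos..<Suc (rpos + rlen)}" for i
    using that l by (intro face_coeff_repeat[OF degen]) (auto simp: nth_degen)
  have "(\<Sum>i\<in>{rpos..<Suc (rpos + rlen)}. dh_term i)
      = (\<Sum>i\<in>{rpos..<rpos + Suc rlen}. if s = t then signed rpos (signed i u) else 0)"
  proof (rule sum.cong)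
    fix i assume "i \<in> {rpos..<rpos + Suc rlen}"
    then have i: "i \<in> {rpos..<Suc (rpos + rlen)}" by simp
    show "dh_term i = (if s = t then signed rpos (signed i u) else 0)"
      unfolding dh_term_def face_eq[OF i] coeff[OF i] by (simp add: signed_signed add.commute)
  qed simp
  also have "\<dots> = (if s = t then signed rpos (\<Sum>i\<in>{rpos..<rpos + Suc rlen}. signed i u) else 0)"
    by (simp only: sum_if_const_cond signed_sum)
  also have "(\<Sum>i\<in>{rpos..<rpos + Suc rlen}. signed i u) = signed rpos u"
    by (simp only: sum_signed_interval) (simp add: assms)
  finally show ?thesis by auto
qed

lemma homotopy_formula:
  "bdry scale P R (Suc (Suc n)) (homotopy (Suc n) (single_chain s u)) t
     + homotopy n (bdry scale P R (Suc n) (single_chain s u)) t = (if t = s then u else 0)"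
proof -
  let ?tail = "{rpos + rlen..<Suc (Suc n)}"
  have bounds: "rpos \<le> rpos + rlen" "rpos + rlen \<le> Suc (Suc n)" using rlen(2) length_s by simp_all
  have "homotopy n (bdry scale P R (Suc n) (single_chain s u)) t = (\<Sum>i\<in>{0..<Suc (Suc n)}. hd_term i)"
    by (simp add: homotopy_bdry_single_chain[OF chain] hd_term_def atLeastLessThanSuc_atLeastAtMost)
  also have "\<dots> = (\<Sum>i\<in>{0..<rpos}. hd_term i) + (\<Sum>i\<in>{rpos..<rpos + rlen}. hd_term i)
      + (\<Sum>i\<in>?tail. hd_term i)"
    using bounds sum.atLeastLessThan_concat[of 0 rpos "rpos + rlen" hd_term]
      sum.atLeastLessThan_concat[of 0 "rpos + rlen" "Suc (Suc n)" hd_term]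
    by (simp del: sum.op_ivl_Suc)
  finally have hd_sum: "homotopy n (bdry scale P R (Suc n) (single_chain s u)) t
      = (\<Sum>i\<in>{rpos..<rpos + rlen}. hd_term i) + (\<Sum>i\<in>?tail. hd_term i)"
    by (simp add: hd_term_before_run)
  have "(\<Sum>i\<in>{0..Suc (Suc n)}. dh_term i) = (\<Sum>i\<in>{0..<rpos}. dh_term i)
      + (\<Sum>i\<in>{rpos..<Suc (rpos + rlen)}. dh_term i) + (\<Sum>i\<in>{Suc (rpos + rlen)..<Suc (Suc (Suc n))}. dh_term i)"
    using bounds sum.atLeastLessThan_concat[of 0 rpos "Suc (rpos + rlen)" dh_term]
      sum.atLeastLessThan_concat[of 0 "Suc (rpos + rlen)" "Suc (Suc (Suc n))" dh_term]
    by (simp del: sum.op_ivl_Suc sum.cl_ivl_Suc add: atLeastLessThanSuc_atLeastAtMost[symmetric])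
  then have dh_sum: "(\<Sum>i\<in>{0..Suc (Suc n)}. dh_term i)
      = (\<Sum>i\<in>{rpos..<Suc (rpos + rlen)}. dh_term i) + (\<Sum>i\<in>?tail. dh_term (Suc i))"
    using sum.shift_bounds_Suc_ivl[of dh_term "rpos + rlen" "Suc (Suc n)"]
    by (simp del: sum.op_ivl_Suc sum.cl_ivl_Suc add: dh_term_before_run)
  have "even_first_run s \<longleftrightarrow> even rlen" using not_distinct by (simp add: even_first_run_def)
  then have dh: "bdry scale P R (Suc (Suc n)) (homotopy (Suc n) (single_chain s u)) t
      = (if even rlen then (\<Sum>i\<in>{0..Suc (Suc n)}. dh_term i) else 0)"
    unfolding bdry_homotopy_single_chain[OF chain] dh_term_def by simp
  have "(\<Sum>i\<in>?tail. (if even rlen then dh_term (Suc i) else 0) + hd_term i) = 0"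
    using length_s by (intro sum.neutral ballI after_run_cancel) auto
  then show ?thesis
    using hd_sum dh_sum dh sum_hd_term_run sum_dh_term_run
    by (cases "even rlen") (simp_all add: sum.distrib algebra_simps)
qed

end

context finite_sheaf
begin

lemma homotopy_formula_single_chain:
  assumes "s \<in> chains P (Suc n)" "\<not> distinct s" "u \<in> F (hd s)" "card (set s) \<le> card (set t)"
  shows "bdry scale P R (Suc (Suc n)) (homotopy (Suc n) (single_chain s u)) t
     + homotopy n (bdry scale P R (Suc n) (single_chain s u)) t = (if t = s then u else 0)"
proof -
  interpret degenerate_chain scale P F R s n u t
    using assms by unfold_locales (simp_all add: sheaf finite_dim)
  show ?thesis by (rule homotopy_formula)
qed

lemma bdry_homotopy_cycle:
  assumes z: "z \<in> D (Suc n)" and cycle: "bdry scale P R (Suc n) z = 0"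
    and support: "\<And>s. z s \<noteq> 0 \<Longrightarrow> card (set s) \<le> p" and t: "p \<le> card (set t)"
  shows "bdry scale P R (Suc (Suc n)) (homotopy (Suc n) z) t = z t"
proof -
  have zS: "z \<in> S (Suc n)" using z D_subset by blast
  let ?X = "chains P (Suc n)"
  have single: "single_chain s (z s) \<in> S (Suc n)" if "s \<in> ?X" for s
    using that single_chain_mem chain_space_mem[OF zS] by blast
  have z_sum: "z = (\<Sum>s\<in>?X. single_chain s (z s))"
    using zS by (intro sum_single_chain) (simp_all add: chain_space_eq finite_chains)
  have "bdry scale P R (Suc (Suc n)) (homotopy (Suc n) z)
      = (\<Sum>s\<in>?X. bdry scale P R (Suc (Suc n)) (homotopy (Suc n) (single_chain s (z s))))"
    by (subst z_sum, subst homotopy_sum, rule bdry_sum)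
       (auto intro: finite_chains D_subset[THEN subsetD] homotopy_mem_D single)
  moreover have "homotopy n (bdry scale P R (Suc n) z)
      = (\<Sum>s\<in>?X. homotopy n (bdry scale P R (Suc n) (single_chain s (z s))))"
    by (subst z_sum, subst bdry_sum) (simp_all add: finite_chains single homotopy_sum)
  moreover have "bdry scale P R (Suc (Suc n)) (homotopy (Suc n) (single_chain s (z s))) t
      + homotopy n (bdry scale P R (Suc n) (single_chain s (z s))) t = (if t = s then z s else 0)"
    if s: "s \<in> ?X" for s
  proof (cases "z s = 0")
    case False
    then have "\<not> distinct s" using z s by (auto simp: chain_subspace_def)
    then show ?thesis
      using homotopy_formula_single_chain[OF s _ chain_space_mem[OF zS s]] support[OF False] t by simp
  qed simp
  ultimately have "bdry scale P R (Suc (Suc n)) (homotopy (Suc n) z) t + homotopy n (bdry scale P R (Suc n) z) t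
      = (\<Sum>s\<in>?X. if t = s then z s else 0)"
    by (simp add: sum_apply_fun sum.distrib[symmetric])
  also have "\<dots> = z t" using chain_space_outside[OF zS, of t] by (simp add: finite_chains)
  finally show ?thesis using cycle by simp
qed

lemma degenerate_cycle_minus_bdry_homotopy:
  assumes z: "z \<in> D (Suc n)" and cycle: "bdry scale P R (Suc n) z = 0"
    and support: "\<And>s. z s \<noteq> 0 \<Longrightarrow> card (set s) \<le> Suc p"
  defines "z' \<equiv> z - bdry scale P R (Suc (Suc n)) (homotopy (Suc n) z)"
  shows "z' \<in> D (Suc n)" "bdry scale P R (Suc n) z' = 0" "\<And>s. z' s \<noteq> 0 \<Longrightarrow> card (set s) \<le> p"
proof -
  have zS: "z \<in> S (Suc n)" using z D_subset by blast
  have w: "homotopy (Suc n) z \<in> S (Suc (Suc n))" using homotopy_mem_D[OF zS] D_subset by blast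
  have dw: "bdry scale P R (Suc (Suc n)) (homotopy (Suc n) z) \<in> D (Suc n)"
    using bdry_D homotopy_mem_D[OF zS] by blast
  then show "z' \<in> D (Suc n)" unfolding z'_def using fun_vs.subspace_diff[OF subspace_D z] by blast
  have "bdry scale P R (Suc (Suc n)) (homotopy (Suc n) z) \<in> S (Suc n)" using dw D_subset by blast
  then show "bdry scale P R (Suc n) z' = 0"
    unfolding z'_def using bdry_diff[OF zS] cycle bdry_bdry[OF w] by simp
  show "card (set s) \<le> p" if "z' s \<noteq> 0" for s
  proof (rule ccontr)
    assume "\<not> card (set s) \<le> p"
    then have "bdry scale P R (Suc (Suc n)) (homotopy (Suc n) z) s = z s"
      using bdry_homotopy_cycle[OF z cycle, of "Suc p" s] support by simp
    then show False using that by (simp add: z'_def)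
  qed
qed

lemma degenerate_cycle_is_boundary_bounded:
  assumes "z \<in> D (Suc n)" "bdry scale P R (Suc n) z = 0" "\<And>s. z s \<noteq> 0 \<Longrightarrow> card (set s) \<le> p"
  shows "z \<in> bdry scale P R (Suc (Suc n)) ` D (Suc (Suc n))"
  using assms
proof (induction p arbitrary: z)
  case 0
  have "z s = 0" for s
  proof (rule ccontr)
    assume ne: "z s \<noteq> 0"
    then have "s \<in> chains P (Suc n)" using 0(1) by (auto simp: chain_subspace_def)
    moreover have "set s = {}" using 0(3)[OF ne] by simp
    ultimately show False by (simp add: chains_def)
  qed
  then have "z = 0" by (simp add: fun_eq_iff)
  then show ?case using fun_vs.subspace_0[OF subspace_D] bdry_zero by (metis image_eqI)
next
  case (Suc p)
  define w where "w = homotopy (Suc n) z"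
  have w: "w \<in> D (Suc (Suc n))" unfolding w_def using homotopy_mem_D Suc.prems(1) D_subset by blast
  obtain w' where w': "w' \<in> D (Suc (Suc n))" "z - bdry scale P R (Suc (Suc n)) w = bdry scale P R (Suc (Suc n)) w'"
    using Suc.IH degenerate_cycle_minus_bdry_homotopy[OF Suc.prems] unfolding w_def by blast
  moreover have "w \<in> S (Suc (Suc n))" "w' \<in> S (Suc (Suc n))" using w w'(1) D_subset by blast+
  ultimately have "z = bdry scale P R (Suc (Suc n)) (w + w')"
    by (simp add: bdry_add diff_eq_eq add.commute)
  then show ?case using fun_vs.subspace_add[OF subspace_D w w'(1)] by blast
qed

lemma degenerate_cycle_is_boundary:
  assumes z: "z \<in> D m" and cycle: "bdry scale P R m z = 0"
  shows "z \<in> bdry scale P R (Suc m) ` D (Suc m)"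
proof (cases m)
  case 0
  then have "z = 0" using z by (auto simp: chain_subspace_def chains_def length_Suc_conv fun_eq_iff)
  then show ?thesis using fun_vs.subspace_0[OF subspace_D] bdry_zero by (metis image_eqI)
next
  case (Suc n)
  have "card (set s) \<le> card P" if "z s \<noteq> 0" for s
  proof -
    have "s \<in> chains P m" using that z by (auto simp: chain_subspace_def)
    then show ?thesis by (intro card_mono) (auto simp: chains_def)
  qed
  then show ?thesis using degenerate_cycle_is_boundary_bounded[of z n "card P"] z cycle Suc by simp
qed

end

section \<open>The Euler characteristic\<close>

lemma alternating_sum_telescope:
  fixes z b :: "nat \<Rightarrow> int"
  assumes "b 0 = 0"
  shows "(\<Sum>n<M. (-1) ^ n * (z n - b (Suc n))) = (\<Sum>n<M. (-1) ^ n * (z n + b n)) + (-1) ^ M * b M"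
  by (induction M) (simp_all add: assms algebra_simps)

context finite_sheaf
begin

lemma linear_on_bdry: "linear_on (fscale scale) (S n) (bdry scale P R n)"
  by (simp add: linear_on_def bdry_add bdry_scale)

lemma linear_on_normalize: "linear_on (fscale scale) U normalize"
  by (simp add: linear_on_def normalize_add normalize_scale)

abbreviation cycles :: "(nat \<Rightarrow> ('a list \<Rightarrow> 'v) set) \<Rightarrow> nat \<Rightarrow> ('a list \<Rightarrow> 'v) set" where
  "cycles X n \<equiv> {c \<in> X n. bdry scale P R n c = 0}"

abbreviation boundaries :: "(nat \<Rightarrow> ('a list \<Rightarrow> 'v) set) \<Rightarrow> nat \<Rightarrow> ('a list \<Rightarrow> 'v) set" where
  "boundaries X n \<equiv> bdry scale P R (Suc n) ` X (Suc n)"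

lemma cycles_subspace: "fun_vs.subspace X \<Longrightarrow> X \<subseteq> S n \<Longrightarrow> fun_vs.subspace {c \<in> X. bdry scale P R n c = 0}"
  by (intro fun_vs.subspace_kernel_on linear_on_subset[OF linear_on_bdry])

lemma image_bdry_subspace: "fun_vs.subspace X \<Longrightarrow> X \<subseteq> S n \<Longrightarrow> fun_vs.subspace (bdry scale P R n ` X)"
  by (intro fun_vs.subspace_image_on linear_on_subset[OF linear_on_bdry])

lemma dim_split_normalize:
  assumes "fun_vs.subspace X" "X \<subseteq> S n"
  shows "fun_vs.dim X = fun_vs.dim {c \<in> X. normalize c = 0} + fun_vs.dim (normalize ` X)"
proof -
  obtain A where "finite A" "X \<subseteq> fun_vs.span A" using finite_dim_S[of n] assms(2) by blast
  then show ?thesis using fun_vs.rank_nullity[OF assms(1) linear_on_normalize] by blast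
qed

lemma dim_cycles_S: "fun_vs.dim (cycles S n) = fun_vs.dim (cycles D n) + fun_vs.dim (cycles N n)"
proof -
  have "{c \<in> cycles S n. normalize c = 0} = cycles D n"
    using normalize_eq_0_iff D_subset by auto
  moreover have "normalize ` cycles S n = cycles N n"
  proof (intro equalityI subsetI)
    fix c assume "c \<in> normalize ` cycles S n"
    then show "c \<in> cycles N n" using normalize_mem_N normalize_bdry[symmetric] by auto
  next
    fix c assume c: "c \<in> cycles N n"
    then have "c = normalize c" "c \<in> cycles S n" using normalize_N N_subset by auto
    then show "c \<in> normalize ` cycles S n" by blast
  qed
  ultimately show ?thesis
    using dim_split_normalize[of "cycles S n" n] cycles_subspace[OF subspace_chain_space] by simp
qed

lemma dim_boundaries_S:
  "fun_vs.dim (boundaries S n) = fun_vs.dim (boundaries D n) + fun_vs.dim (boundaries N n)"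
proof -
  let ?d = "bdry scale P R (Suc n)"
  have "{b \<in> boundaries S n. normalize b = 0} = boundaries D n"
  proof (intro equalityI subsetI)
    fix b assume "b \<in> {b \<in> boundaries S n. normalize b = 0}"
    then obtain c where c: "c \<in> S (Suc n)" "b = ?d c" "?d (normalize c) = 0"
      using normalize_bdry by auto
    moreover have "normalize c \<in> S (Suc n)" using normalize_mem_N[OF c(1)] N_subset by blast
    ultimately have "b = ?d (c - normalize c)" using bdry_diff[OF c(1)] by simp
    then show "b \<in> boundaries D n" using diff_normalize_mem_D[OF c(1)] by blast
  next
    fix b assume "b \<in> boundaries D n"
    then obtain c where c: "c \<in> D (Suc n)" "b = ?d c" by blast
    moreover have "c \<in> S (Suc n)" using c(1) D_subset by blast
    ultimately show "b \<in> {b \<in> boundaries S n. normalize b = 0}"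
      using normalize_bdry normalize_D by auto
  qed
  moreover have "normalize ` boundaries S n = boundaries N n"
  proof (intro equalityI subsetI)
    fix b assume "b \<in> normalize ` boundaries S n"
    then show "b \<in> boundaries N n" using normalize_bdry normalize_mem_N by auto
  next
    fix b assume "b \<in> boundaries N n"
    then obtain c where c: "c \<in> N (Suc n)" "b = ?d c" by blast
    moreover have cS: "c \<in> S (Suc n)" using c(1) N_subset by blast
    ultimately have "b = normalize (?d c)" using normalize_N normalize_bdry by simp
    then show "b \<in> normalize ` boundaries S n" using cS by blast
  qed
  moreover have "boundaries S n \<subseteq> S n" using bdry_mem by blast
  ultimately show ?thesis
    using dim_split_normalize[of "boundaries S n" n] image_bdry_subspace[OF subspace_chain_space order_refl]
    by simp
qed

lemma cycles_D_eq_boundaries_D: "cycles D n = boundaries D n"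
  using degenerate_cycle_is_boundary bdry_D bdry_bdry D_subset by fastforce

lemma HS_dim_normalized:
  "HS_dim scale P F R n = int (fun_vs.dim (cycles N n)) - int (fun_vs.dim (boundaries N n))"
  unfolding HS_dim_def dim_cycles_S dim_boundaries_S cycles_D_eq_boundaries_D by simp

lemma N_eq_zero: "card P \<le> n \<Longrightarrow> N n = {0}"
proof -
  assume n: "card P \<le> n"
  have "{s \<in> chains P n. distinct s} = {}"
  proof (rule ccontr)
    assume "{s \<in> chains P n. distinct s} \<noteq> {}"
    then obtain s where s: "s \<in> chains P n" "distinct s" by blast
    then have "card (set s) = Suc n" using distinct_card length_chains by metis
    moreover have "card (set s) \<le> card P" using s by (intro card_mono) (auto simp: chains_def)
    ultimately show False using n by simp
  qed
  then show ?thesis by (auto simp: chain_subspace_def)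
qed

lemma dim_N_rank_nullity:
  "fun_vs.dim (N n) = fun_vs.dim (cycles N n) + fun_vs.dim (bdry scale P R n ` N n)"
proof -
  obtain A where "finite A" "N n \<subseteq> fun_vs.span A" using finite_dim_S[of n] N_subset by blast
  then show ?thesis
    using fun_vs.rank_nullity[OF subspace_N linear_on_subset[OF linear_on_bdry N_subset]] by blast
qed

lemma euler_char_normalized: "euler_char_HS scale P F R = (\<Sum>n<card P. (-1) ^ n * int (fun_vs.dim (N n)))"
proof -
  define z where "z n = int (fun_vs.dim (cycles N n))" for n
  define b where "b n = int (fun_vs.dim (bdry scale P R n ` N n))" for n
  have dim_N: "int (fun_vs.dim (N n)) = z n + b n" for n
    using dim_N_rank_nullity[of n] by (simp add: z_def b_def)
  have "bdry scale P R 0 ` N 0 = {0}"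
    using fun_vs.subspace_0[OF subspace_N] by (auto simp: bdry_def zero_fun_def)
  then have b0: "b 0 = 0" by (simp add: b_def fun_vs.dim_zero_subspace)
  have vanish: "z n = 0 \<and> b n = 0" if "card P \<le> n" for n
    using dim_N[of n] N_eq_zero[OF that] by (simp add: fun_vs.dim_zero_subspace z_def b_def)
  have HS: "HS_dim scale P F R n = z n - b (Suc n)" for n
    by (simp add: HS_dim_normalized z_def b_def)
  have "{n. HS_dim scale P F R n \<noteq> 0} \<subseteq> {..<card P}"
  proof
    fix n assume "n \<in> {n. HS_dim scale P F R n \<noteq> 0}"
    then show "n \<in> {..<card P}" using vanish[of n] vanish[of "Suc n"] by (cases "card P \<le> n") (auto simp: HS)
  qed
  then have "euler_char_HS scale P F R = (\<Sum>n<card P. (-1) ^ n * HS_dim scale P F R n)"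
    unfolding euler_char_HS_def by (intro sum.mono_neutral_left) auto
  also have "\<dots> = (\<Sum>n<card P. (-1) ^ n * (z n + b n))"
    using alternating_sum_telescope[of b z "card P", OF b0] vanish[of "card P"] by (simp add: HS)
  finally show ?thesis by (simp add: dim_N)
qed

end

section \<open>Strict chains and the Moebius function\<close>

definition strict_chains :: "'a::order set \<Rightarrow> 'a list set" where
  "strict_chains P = {s. s \<noteq> [] \<and> distinct s \<and> descending s \<and> set s \<subseteq> P}"

definition top_chain_sum :: "'a::order set \<Rightarrow> 'a \<Rightarrow> int" where
  "top_chain_sum P x = (\<Sum>s\<in>{s \<in> strict_chains P. hd s = x}. (-1) ^ (length s - 1))"

lemma finite_strict_chains: "finite (strict_chains (P::'a::{finite,order} set))"
proof -
  have "strict_chains P \<subseteq> {s. set s \<subseteq> UNIV \<and> length s \<le> card (UNIV :: 'a set)}"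
    by (auto simp: strict_chains_def distinct_card[symmetric] intro!: card_mono)
  moreover have "finite {s. set s \<subseteq> (UNIV :: 'a set) \<and> length s \<le> card (UNIV :: 'a set)}"
    by (rule finite_lists_length_le) simp
  ultimately show ?thesis by (rule finite_subset)
qed

lemma strict_chains_eq_Union:
  "strict_chains (P::'a::{finite,order} set) = (\<Union>n<card P. {s \<in> chains P n. distinct s})"
proof (intro equalityI subsetI)
  fix s assume s: "s \<in> strict_chains P"
  then have "length s \<le> card P" "s \<noteq> []"
    by (auto simp: strict_chains_def distinct_card[symmetric] intro: card_mono)
  then show "s \<in> (\<Union>n<card P. {s \<in> chains P n. distinct s})"
    using s by (cases s) (auto simp: strict_chains_def chains_def)
qed (auto simp: strict_chains_def chains_def)

lemma strict_chains_top:
  assumes "x \<in> P"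
  shows "{s \<in> strict_chains P. hd s = x} = insert [x] ((#) x ` {s \<in> strict_chains P. hd s < x})"
proof (intro equalityI subsetI)
  fix s assume s: "s \<in> {s \<in> strict_chains P. hd s = x}"
  then obtain s' where s': "s = x # s'" by (cases s) (auto simp: strict_chains_def)
  show "s \<in> insert [x] ((#) x ` {s \<in> strict_chains P. hd s < x})"
  proof (cases "s' = []")
    case False
    then have "hd s' < x" "s' \<in> strict_chains P"
      using s s' hd_in_set[OF False] by (auto simp: strict_chains_def order.strict_iff_order)
    then show ?thesis using s' by blast
  qed (simp add: s')
next
  fix s assume "s \<in> insert [x] ((#) x ` {s \<in> strict_chains P. hd s < x})"
  then show "s \<in> {s \<in> strict_chains P. hd s = x}"
  proof
    assume "s \<in> (#) x ` {s \<in> strict_chains P. hd s < x}"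
    then obtain a s' where s: "s = x # a # s'" "a # s' \<in> strict_chains P" "a < x"
      by (auto simp: strict_chains_def neq_Nil_conv)
    then have "\<forall>y\<in>set (a # s'). y < x" by (auto simp: strict_chains_def intro: order.strict_trans1)
    then show ?thesis using s assms by (auto simp: strict_chains_def)
  qed (use assms in \<open>simp add: strict_chains_def\<close>)
qed

lemma top_chain_sum_rec:
  assumes x: "x \<in> (P::'a::{finite,order} set)"
  shows "top_chain_sum P x = 1 - (\<Sum>y\<in>{y \<in> P. y < x}. top_chain_sum P y)"
proof -
  let ?T = "{s \<in> strict_chains P. hd s < x}"
  have fin: "finite ?T" by (rule finite_subset[OF _ finite_strict_chains]) auto
  have "top_chain_sum P x = 1 + (\<Sum>s\<in>?T. (-1) ^ length s)"
    unfolding top_chain_sum_def strict_chains_top[OF x]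
    using fin by (subst sum.insert) (auto simp: sum.reindex inj_on_def strict_chains_def)
  also have "(\<Sum>s\<in>?T. (-1) ^ length s) = - (\<Sum>s\<in>?T. (-1) ^ (length s - 1) :: int)"
    by (auto simp: sum_negf[symmetric] strict_chains_def neq_Nil_conv intro!: sum.cong)
  also have "(\<Sum>s\<in>?T. (-1) ^ (length s - 1))
      = (\<Sum>y\<in>{y \<in> P. y < x}. \<Sum>s\<in>{s \<in> ?T. hd s = y}. (-1) ^ (length s - 1))"
    by (rule sum.group[symmetric]) (use fin in \<open>auto simp: strict_chains_def\<close>)
  also have "\<dots> = (\<Sum>y\<in>{y \<in> P. y < x}. top_chain_sum P y)"
    unfolding top_chain_sum_def by (intro sum.cong refl) auto
  finally show ?thesis by simp
qed

lemma mobius_bot_rec: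
  fixes x :: "'a::{finite,order_bot}"
  assumes "x \<noteq> bot"
  shows "mobius bot x = - 1 - (\<Sum>y\<in>{y \<in> UNIV - {bot}. y < x}. mobius bot y)"
proof -
  have "{z. bot \<le> z \<and> z < x} = insert bot {y \<in> UNIV - {bot}. y < x}"
    using assms by (auto simp: bot.not_eq_extremum)
  then show ?thesis
    using assms by (subst mobius.simps) (simp add: bot.not_eq_extremum mobius.simps[of bot bot])
qed

lemma top_chain_sum_eq_mobius:
  fixes x :: "'a::{finite,order_bot}"
  shows "x \<noteq> bot \<Longrightarrow> top_chain_sum (UNIV - {bot}) x = - mobius bot x"
proof (induction x rule: measure_induct_rule[where f="\<lambda>x. card {w. w < x}"])
  case (less x)
  have "top_chain_sum (UNIV - {bot}) y = - mobius bot y" if "y < x" "y \<noteq> bot" for y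
  proof -
    have "{w. w < y} \<subset> {w. w < x}" using that by (auto dest: order.strict_trans)
    then show ?thesis using less.IH that psubset_card_mono[OF finite] by blast
  qed
  then have "(\<Sum>y\<in>{y \<in> UNIV - {bot}. y < x}. top_chain_sum (UNIV - {bot}) y)
      = (\<Sum>y\<in>{y \<in> UNIV - {bot}. y < x}. - mobius bot y)" by (intro sum.cong) auto
  then show ?case
    using top_chain_sum_rec[of x "UNIV - {bot}"] mobius_bot_rec[OF less.prems] less.prems
    by (simp add: sum_negf)
qed

context finite_sheaf
begin

lemma euler_char_top_chain_sum:
  "euler_char_HS scale P F R = (\<Sum>x\<in>P. int (stalk.dim (F x)) * top_chain_sum P x)"
proof -
  let ?d = "\<lambda>s. int (stalk.dim (F (hd s)))"
  have "euler_char_HS scale P F R = (\<Sum>n<card P. \<Sum>s\<in>{s \<in> chains P n. distinct s}. (-1) ^ (length s - 1) * ?d s)"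
    unfolding euler_char_normalized
  proof (rule sum.cong[OF refl])
    fix n
    have "fun_vs.dim (N n) = (\<Sum>s\<in>{s \<in> chains P n. distinct s}. stalk.dim (F (hd s)))"
      by (rule dim_chain_subspace) (auto simp: finite_chains hd_chains_mem)
    then show "(-1) ^ n * int (fun_vs.dim (N n))
        = (\<Sum>s\<in>{s \<in> chains P n. distinct s}. (-1) ^ (length s - 1) * ?d s)"
      by (auto simp: sum_distrib_left length_chains intro!: sum.cong)
  qed
  also have "\<dots> = (\<Sum>s\<in>strict_chains P. (-1) ^ (length s - 1) * ?d s)"
    unfolding strict_chains_eq_Union
    by (rule sum.UNION_disjoint[symmetric]) (simp_all add: finite_chains, auto simp: chains_def)
  also have "\<dots> = (\<Sum>x\<in>P. \<Sum>s\<in>{s \<in> strict_chains P. hd s = x}. (-1) ^ (length s - 1) * ?d s)"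
    by (rule sum.group[symmetric]) (simp_all add: finite_strict_chains, auto simp: strict_chains_def)
  also have "\<dots> = (\<Sum>x\<in>P. int (stalk.dim (F x)) * top_chain_sum P x)"
    unfolding top_chain_sum_def sum_distrib_left by (intro sum.cong refl) (simp add: mult.commute)
  finally show ?thesis .
qed

end

theorem proposition2:
  fixes scale :: "'k::field \<Rightarrow> 'v::ab_group_add \<Rightarrow> 'v"
    and F :: "'a::{finite, bounded_lattice_bot} \<Rightarrow> 'v set"
    and R :: "'a \<Rightarrow> 'a \<Rightarrow> 'v \<Rightarrow> 'v"
  assumes "is_sheaf scale (UNIV - {bot}) F R"
    and "finite_dim_stalks scale (UNIV - {bot}) F"
  shows "euler_char_HS scale (UNIV - {bot}) F R
           = - (\<Sum>x\<in>UNIV - {bot}. mobius bot x * int (Vector_Spaces.vector_space.dim scale (F x)))"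
proof -
  interpret finite_sheaf scale "UNIV - {bot}" F R
    using assms by unfold_locales
  show ?thesis
    unfolding euler_char_top_chain_sum
    by (simp add: top_chain_sum_eq_mobius sum_negf[symmetric] mult.commute)
qed

end
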